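(* Let $\Sigma$ be a planar model. For any $\varepsilon,C,\rho>0$ there exists $N_\varepsilon=N(\varepsilon,C,\rho)$ such that: if $\omega\in\Omega$ and $k\in\mathbb N$ are such that $\eta^{(T^{k'(\omega)}\omega)}$ is $(C,\rho)$-Frostman on tubes, and $n=k'(\omega)+N_\varepsilon$, then $$\mathbf P_{i=k}\big(d_{TV}(\eta^{(\omega)}_{x,i},\ \eta^{(\omega)}_{n,[x,i]})<\varepsilon\big)>1-\varepsilon,$$ where $d_{TV}$ is the total variation distance.
   Context: Planar model $\Sigma$: $I$ finite; $f^{(i)}_j(z)=\lambda_iz+t^{(i)}_j$, $\lambda_i=r_i\varphi_i$, $0<r_i<1$; positive probability vectors $p_i$; $\Omega=I^{\mathbb N}$, $T$ the shift. For $u\in\mathbb X^{(\omega)}_n=\prod_{j\le n}\{1,\dots,k_{\omega_j}\}$, $f^{(\omega)}_u=f^{(\omega_1)}_{u_1}\circ\dots\circ f^{(\omega_n)}_{u_n}$, $p^{(\omega)}_u=\prod_jp^{(\omega_j)}_{u_j}$. $\eta^{(\omega)}$ is the law of $\sum_{n\ge1}(\prod_{j<n}\lambda_{\omega_j})t^{(\omega_n)}_{u_n}$, $u_n$ independent with laws $p_{\omega_n}$. Fix $R>0$ with $\overline{f^{(i)}_j(B(0,R))}\subset B(0,R)$ and $2R\min r_i>1/2$; $B^{(\omega)}_u=f^{(\omega)}_u(B(0,R))$; $k'(\omega)$ is the natural number with $2R\prod_{i=1}^{k'}r_{\omega_i}\le2^{-k}\le2R\prod_{i=1}^{k'-1}r_{\omega_i}$.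 Raw component: $\mu_{x,i}=\mu|_D/\mu(D)$ for $D=D_i(x)$ the dyadic square of side $2^{-i}$ containing $x$; $\mathbf P_{i=k}(\mu_{x,i}\in A)=\mu(\{x:\mu_{x,k}\in A\})$. Truncated component: for $D\in\mathcal D_k$ and $n>k$, $\eta^{(\omega)}_{n,[D]}=Z^{-1}\sum_{u\in\mathbb X^{(\omega)}_n,\ B^{(\omega)}_u\subset D}p^{(\omega)}_uf^{(\omega)}_u\eta^{(T^n\omega)}$ with $Z$ normalizing, and $\eta^{(\omega)}_{n,[x,k]}=\eta^{(\omega)}_{n,[D_k(x)]}$. $\mu$ is $(C,\rho)$-Frostman on tubes if $\mu(B(W+x,r))\le Cr^\rho$ for all lines $W$ through $0$, $x\in\mathbb R^2$, $r>0$. *)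

theory Defs
  imports "HOL-Probability.Probability"
begin

text \<open>For each i the IFS has maps
  f^(i)_j(z) = lam i * z + t i j, for j < kk i (digits are 0-based naturals).
  Sequences omega in Omega = I^N are functions nat => 'i, with omega 0 playing
  the role of omega_1.\<close>

definition fmap :: "('i \<Rightarrow> complex) \<Rightarrow> ('i \<Rightarrow> nat \<Rightarrow> complex) \<Rightarrow> 'i \<Rightarrow> nat \<Rightarrow> complex \<Rightarrow> complex" where
  "fmap lam t i j z = lam i * z + t i j"

definition planar_model ::
  "('i::finite \<Rightarrow> nat) \<Rightarrow> ('i \<Rightarrow> complex) \<Rightarrow> ('i \<Rightarrow> nat \<Rightarrow> complex) \<Rightarrow> ('i \<Rightarrow> nat \<Rightarrow> real) \<Rightarrow> real \<Rightarrow> bool" where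
  "planar_model kk lam t p R \<longleftrightarrow>
     (\<forall>i. kk i \<ge> 1) \<and>
     (\<forall>i. 0 < norm (lam i) \<and> norm (lam i) < 1) \<and>
     (\<forall>i. (\<forall>j<kk i. p i j > 0) \<and> (\<Sum>j<kk i. p i j) = 1) \<and>
     R > 0 \<and>
     (\<forall>i. \<forall>j<kk i. closure (fmap lam t i j ` ball 0 R) \<subseteq> ball 0 R) \<and>
     (\<forall>i. 2 * R * norm (lam i) > 1/2)"

definition shiftn :: "nat \<Rightarrow> (nat \<Rightarrow> 'i) \<Rightarrow> (nat \<Rightarrow> 'i)" where
  "shiftn n \<omega> = (\<lambda>j. \<omega> (j + n))"

definition digit_pmf :: "('i \<Rightarrow> nat) \<Rightarrow> ('i \<Rightarrow> nat \<Rightarrow> real) \<Rightarrow> 'i \<Rightarrow> nat pmf" where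
  "digit_pmf kk p i = embed_pmf (\<lambda>j. if j < kk i then p i j else 0)"

definition eta :: "('i \<Rightarrow> nat) \<Rightarrow> ('i \<Rightarrow> complex) \<Rightarrow> ('i \<Rightarrow> nat \<Rightarrow> complex) \<Rightarrow> ('i \<Rightarrow> nat \<Rightarrow> real)
     \<Rightarrow> (nat \<Rightarrow> 'i) \<Rightarrow> complex measure" where
  "eta kk lam t p \<omega> =
     distr (\<Pi>\<^sub>M m\<in>UNIV. measure_pmf (digit_pmf kk p (\<omega> m))) borel
       (\<lambda>u. \<Sum>m. (\<Prod>j<m. lam (\<omega> j)) * t (\<omega> m) (u m))"

definition words :: "('i \<Rightarrow> nat) \<Rightarrow> (nat \<Rightarrow> 'i) \<Rightarrow> nat \<Rightarrow> nat list set" where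
  "words kk \<omega> n = {u. length u = n \<and> (\<forall>j<n. u ! j < kk (\<omega> j))}"

fun fword :: "('i \<Rightarrow> complex) \<Rightarrow> ('i \<Rightarrow> nat \<Rightarrow> complex) \<Rightarrow> (nat \<Rightarrow> 'i) \<Rightarrow> nat list \<Rightarrow> complex \<Rightarrow> complex" where
  "fword lam t \<omega> [] = id"
| "fword lam t \<omega> (a # u) = fmap lam t (\<omega> 0) a \<circ> fword lam t (shiftn 1 \<omega>) u"

fun pword :: "('i \<Rightarrow> nat \<Rightarrow> real) \<Rightarrow> (nat \<Rightarrow> 'i) \<Rightarrow> nat list \<Rightarrow> real" where
  "pword p \<omega> [] = 1"
| "pword p \<omega> (a # u) = p (\<omega> 0) a * pword p (shiftn 1 \<omega>) u"

text \<open>D_i(x): the half-open dyadic square of side 2^-i containing x.\<close>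
definition dyadic :: "nat \<Rightarrow> complex \<Rightarrow> complex set" where
  "dyadic i x = {z. \<lfloor>2 ^ i * Re z\<rfloor> = \<lfloor>(2::real) ^ i * Re x\<rfloor> \<and>
                     \<lfloor>2 ^ i * Im z\<rfloor> = \<lfloor>(2::real) ^ i * Im x\<rfloor>}"

definition raw_comp :: "complex measure \<Rightarrow> nat \<Rightarrow> complex \<Rightarrow> complex measure" where
  "raw_comp \<mu> i x = uniform_measure \<mu> (dyadic i x)"

definition trunc_sq :: "('i \<Rightarrow> nat) \<Rightarrow> ('i \<Rightarrow> complex) \<Rightarrow> ('i \<Rightarrow> nat \<Rightarrow> complex) \<Rightarrow> ('i \<Rightarrow> nat \<Rightarrow> real)
     \<Rightarrow> real \<Rightarrow> (nat \<Rightarrow> 'i) \<Rightarrow> nat \<Rightarrow> complex set \<Rightarrow> complex measure" where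
  "trunc_sq kk lam t p R \<omega> n D =
    (let S = {u \<in> words kk \<omega> n. fword lam t \<omega> u ` ball 0 R \<subseteq> D};
         Z = (\<Sum>u\<in>S. pword p \<omega> u)
     in measure_of UNIV (sets borel)
          (\<lambda>A. (\<Sum>u\<in>S. ennreal (pword p \<omega> u) *
                  emeasure (distr (eta kk lam t p (shiftn n \<omega>)) borel (fword lam t \<omega> u)) A)
               / ennreal Z))"

definition trunc_comp :: "('i \<Rightarrow> nat) \<Rightarrow> ('i \<Rightarrow> complex) \<Rightarrow> ('i \<Rightarrow> nat \<Rightarrow> complex) \<Rightarrow> ('i \<Rightarrow> nat \<Rightarrow> real)
     \<Rightarrow> real \<Rightarrow> (nat \<Rightarrow> 'i) \<Rightarrow> nat \<Rightarrow> nat \<Rightarrow> complex \<Rightarrow> complex measure" where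
  "trunc_comp kk lam t p R \<omega> n i x = trunc_sq kk lam t p R \<omega> n (dyadic i x)"

text \<open>k'(omega): the least natural number k' with 2R prod_{j<k'} r_{omega j} <= 2^-k
  (then also 2^-k <= 2R prod_{j<k'-1} r_{omega j} when k' >= 1).\<close>
definition kprime :: "('i \<Rightarrow> complex) \<Rightarrow> real \<Rightarrow> (nat \<Rightarrow> 'i) \<Rightarrow> nat \<Rightarrow> nat" where
  "kprime lam R \<omega> k = (LEAST k'. 2 * R * (\<Prod>j<k'. norm (lam (\<omega> j))) \<le> 1 / 2 ^ k)"

definition tube :: "complex \<Rightarrow> complex \<Rightarrow> real \<Rightarrow> complex set" where
  "tube e x r = {z. \<exists>s::real. dist z (x + of_real s * e) < r}"

definition frostman_tubes :: "complex measure \<Rightarrow> real \<Rightarrow> real \<Rightarrow> bool" where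
  "frostman_tubes \<mu> C \<rho> \<longleftrightarrow>
     (\<forall>e x r. norm e = 1 \<longrightarrow> r > 0 \<longrightarrow> measure \<mu> (tube e x r) \<le> C * r powr \<rho>)"

definition tv_dist :: "'a measure \<Rightarrow> 'a measure \<Rightarrow> real" where
  "tv_dist \<mu> \<nu> = (SUP A\<in>sets \<mu>. \<bar>measure \<mu> A - measure \<nu> A\<bar>)"

end

theory Submission
  imports Defs
begin

text \<open>Inside a dyadic square D of level k, the raw component eta_D and the truncated component
  differ only through the mass that eta puts on D via cylinders f_u(B(0,R)) of depth n that are not
  contained in D, and each such cylinder straddles the boundary of the level-k square containing
  its centre. Hence their total variation distance is at most nu(D)/eta(D), where nu is the part of
  eta carried by straddling cylinders, and a Markov-type argument shows that the squares on which the
  distance is at least epsilon have eta-mass at most |nu|/epsilon.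

  To bound the total mass |nu|, decompose eta at depth k' = k'(omega). A cylinder f_v(B(0,R)) of
  depth k' has diameter at most 2^-k, so it comes close to at most two vertical and two horizontal
  grid lines of level k, and every straddling cylinder of depth n = k' + N lies near one of them.
  Pulled back by f_v, these neighbourhoods become four tubes of width of order rmax^N, each of
  eta^(T^k' omega)-mass at most C (2 R rmax^N)^rho by the Frostman hypothesis. Hence |nu| < epsilon^2
  once N is large.\<close>

lemma measurable_case_nat_PiM:
  fixes M :: "nat \<Rightarrow> 'a measure"
  shows "(\<lambda>(s, \<omega>). case_nat s \<omega>) \<in> measurable (M 0 \<Otimes>\<^sub>M (\<Pi>\<^sub>M i\<in>UNIV. M (Suc i))) (\<Pi>\<^sub>M i\<in>UNIV. M i)"
proof (rule measurable_PiM_single')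
  fix i :: nat
  show "(\<lambda>x. (case x of (s, \<omega>) \<Rightarrow> case_nat s \<omega>) i) \<in> measurable (M 0 \<Otimes>\<^sub>M (\<Pi>\<^sub>M i\<in>UNIV. M (Suc i))) (M i)"
  proof (cases i)
    case 0 then show ?thesis by (simp add: split_beta')
  next
    case (Suc j)
    have "(\<lambda>x. snd x j) \<in> measurable (M 0 \<Otimes>\<^sub>M (\<Pi>\<^sub>M i\<in>UNIV. M (Suc i))) (M (Suc j))"
      by (rule measurable_compose[OF measurable_snd measurable_component_singleton]) simp
    then show ?thesis using Suc by (simp add: split_beta')
  qed
qed (auto simp: space_pair_measure space_PiM PiE_iff split: nat.split)

lemma distr_case_nat_PiM:
  fixes M :: "nat \<Rightarrow> 'a measure"
  assumes M: "\<And>i. prob_space (M i)"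
  shows "distr (M 0 \<Otimes>\<^sub>M (\<Pi>\<^sub>M i\<in>UNIV. M (Suc i))) (\<Pi>\<^sub>M i\<in>UNIV. M i) (\<lambda>(s, \<omega>). case_nat s \<omega>)
    = (\<Pi>\<^sub>M i\<in>UNIV. M i)" (is "?D = _")
proof -
  interpret product_prob_space M UNIV
    using M by (simp add: product_prob_space_def product_sigma_finite_def
        prob_space_imp_sigma_finite product_prob_space_axioms_def)
  interpret S: product_prob_space "\<lambda>i. M (Suc i)" UNIV
    using M by (simp add: product_prob_space_def product_sigma_finite_def
        prob_space_imp_sigma_finite product_prob_space_axioms_def)
  let ?f = "\<lambda>(s, \<omega>). case_nat s \<omega>" and ?P = "M 0 \<Otimes>\<^sub>M (\<Pi>\<^sub>M i\<in>UNIV. M (Suc i))"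
  show ?thesis
  proof (rule PiM_eq)
  fix J E assume J: "finite J" "J \<subseteq> UNIV" "\<And>j. j \<in> J \<Longrightarrow> E j \<in> sets (M j)"
  let ?X = "prod_emb UNIV M J (\<Pi>\<^sub>E j\<in>J. E j)"
  have "\<And>j x. j \<in> J \<Longrightarrow> x \<in> E j \<Longrightarrow> x \<in> space (M j)"
    using J(3)[THEN sets.sets_into_space] by (auto simp: space_PiM Pi_iff subset_eq)
  with J have "?f -` ?X \<inter> space ?P = (if 0 \<in> J then E 0 else space (M 0)) \<times>
      prod_emb UNIV (\<lambda>i. M (Suc i)) (Suc -` J) (\<Pi>\<^sub>E j\<in>Suc -` J. E (Suc j))" (is "_ = ?E \<times> ?F")
    by (auto simp: space_pair_measure space_PiM PiE_iff prod_emb_def all_conj_distrib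
        split: nat.split nat.split_asm)
  then have "emeasure ?D ?X = emeasure ?P (?E \<times> ?F)"
    by (subst emeasure_distr[OF measurable_case_nat_PiM])
      (auto intro!: sets_PiM_I simp: split_beta' J)
  also have "\<dots> = emeasure (M 0) ?E * emeasure (\<Pi>\<^sub>M i\<in>UNIV. M (Suc i)) ?F"
    using J by (intro S.emeasure_pair_measure_Times sets_PiM_I) (auto intro: finite_vimageI)
  also have "emeasure (\<Pi>\<^sub>M i\<in>UNIV. M (Suc i)) ?F = (\<Prod>j\<in>Suc -` J. emeasure (M (Suc j)) (E (Suc j)))"
    using J by (intro S.emeasure_PiM_emb) (simp_all add: finite_vimageI)
  also have "\<dots> = (\<Prod>j\<in>J - {0}. emeasure (M j) (E j))"
    by (rule prod.reindex_cong [of "\<lambda>x. x - 1"])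
      (auto simp: image_iff ac_simps intro!: inj_onI bexI[of _ "Suc _"])
  also have "emeasure (M 0) ?E * (\<Prod>j\<in>J - {0}. emeasure (M j) (E j)) = (\<Prod>j\<in>J. emeasure (M j) (E j))"
    by (auto simp: prob_space.emeasure_space_1[OF M] prod.remove J)
  finally show "emeasure ?D ?X = (\<Prod>j\<in>J. emeasure (M j) (E j))" .
  qed simp_all
qed

lemma emeasure_finite_mixture:
  fixes \<nu> :: "'b \<Rightarrow> 'a::topological_space measure"
  assumes S: "finite S" and sets: "\<And>u. u \<in> S \<Longrightarrow> sets (\<nu> u) = sets borel"
    and A: "A \<in> sets borel"
  shows "emeasure (measure_of UNIV (sets borel) (\<lambda>A. (\<Sum>u\<in>S. c u * emeasure (\<nu> u) A) / Z)) A
     = (\<Sum>u\<in>S. c u * emeasure (\<nu> u) A) / Z"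
proof (rule emeasure_measure_of_sigma[OF _ _ _ A])
  show "sigma_algebra UNIV (sets (borel :: 'a measure))"
    using sets.sigma_algebra_axioms[of borel] by simp
  show "positive (sets borel) (\<lambda>A. (\<Sum>u\<in>S. c u * emeasure (\<nu> u) A) / Z)"
    unfolding positive_def by simp
  show "countably_additive (sets borel) (\<lambda>A. (\<Sum>u\<in>S. c u * emeasure (\<nu> u) A) / Z)"
    unfolding countably_additive_def
  proof (intro allI impI)
    fix F :: "nat \<Rightarrow> 'a set"
    assume F: "range F \<subseteq> sets borel" "disjoint_family F" "\<Union> (range F) \<in> sets borel"
    have "(\<Sum>i. \<Sum>u\<in>S. c u * emeasure (\<nu> u) (F i)) = (\<Sum>u\<in>S. \<Sum>i. c u * emeasure (\<nu> u) (F i))"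
      by (rule suminf_sum) simp
    also have "\<dots> = (\<Sum>u\<in>S. c u * emeasure (\<nu> u) (\<Union> (range F)))"
      using F sets by (intro sum.cong refl) (simp add: ennreal_suminf_cmult suminf_emeasure)
    finally show "(\<Sum>i. (\<Sum>u\<in>S. c u * emeasure (\<nu> u) (F i)) / Z)
        = (\<Sum>u\<in>S. c u * emeasure (\<nu> u) (\<Union> (range F))) / Z"
      by (simp add: divide_ennreal_def ennreal_suminf_multc)
  qed
qed

lemma abs_ratio_perturbation_le:
  fixes g Z E e :: real
  assumes "0 \<le> g" "g \<le> Z" "0 \<le> E" "E \<le> e" "0 < Z + e"
  shows "\<bar>(g + E) / (Z + e) - g / Z\<bar> \<le> e / (Z + e)"
proof (cases "Z = 0")
  case True
  then show ?thesis using assms by (simp add: divide_right_mono abs_of_nonneg)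
next
  case False
  then have Z: "Z > 0" using assms by simp
  have pos: "Z * (Z + e) > 0" using Z assms by simp
  have "\<bar>Z * E - g * e\<bar> \<le> Z * e"
  proof -
    have "Z * E \<le> Z * e" "g * e \<le> Z * e" "0 \<le> Z * E" "0 \<le> g * e"
      using assms Z by (auto intro: mult_left_mono mult_right_mono)
    then show ?thesis by linarith
  qed
  then have "\<bar>Z * E - g * e\<bar> / (Z * (Z + e)) \<le> Z * e / (Z * (Z + e))"
    using pos by (intro divide_right_mono) auto
  moreover have "(g + E) / (Z + e) - g / Z = (Z * E - g * e) / (Z * (Z + e))"
    using Z assms by (simp add: field_simps)
  ultimately show ?thesis using Z pos by (simp add: abs_div)
qed

section \<open>Grid lines, tubes and dyadic squares\<close>

lemma grid_point_between:
  fixes a x y r :: real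
  assumes a: "a > 0" and xy: "\<bar>x - y\<bar> < r" and fl: "\<lfloor>a * x\<rfloor> \<noteq> \<lfloor>a * y\<rfloor>"
  shows "\<exists>m::int. \<bar>x - m / a\<bar> < r"
proof -
  have between: "\<exists>m::int. min x y < m / a \<and> m / a \<le> max x y"
  proof (cases "x < y")
    case True
    have "\<lfloor>a * x\<rfloor> \<le> \<lfloor>a * y\<rfloor>" using True a by (intro floor_mono) simp
    then have "\<lfloor>a * x\<rfloor> < \<lfloor>a * y\<rfloor>" using fl by simp
    then have "x < \<lfloor>a * y\<rfloor> / a" "\<lfloor>a * y\<rfloor> / a \<le> y"
      using a by (simp_all add: floor_less_iff field_simps)
    then show ?thesis using True by (intro exI[of _ "\<lfloor>a * y\<rfloor>"]) simp
  next
    case False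
    have "\<lfloor>a * y\<rfloor> \<le> \<lfloor>a * x\<rfloor>" using False a by (intro floor_mono) simp
    then have "\<lfloor>a * y\<rfloor> < \<lfloor>a * x\<rfloor>" using fl by simp
    then have "y < \<lfloor>a * x\<rfloor> / a" "\<lfloor>a * x\<rfloor> / a \<le> x"
      using a by (simp_all add: floor_less_iff field_simps)
    then show ?thesis using False by (intro exI[of _ "\<lfloor>a * x\<rfloor>"]) simp
  qed
  then obtain m :: int where "min x y < m / a" "m / a \<le> max x y" by blast
  then have "\<bar>x - m / a\<bar> < r" using xy by (auto simp: min_def max_def split: if_splits)
  then show ?thesis by blast
qed

text \<open>An interval of length less than \<open>3 / (2 a)\<close> contains at most two points of the grid
  \<open>\<int> / a\<close>, and they can be named in terms of its left end point.\<close>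

lemma grid_point_candidates:
  fixes a x c h d :: real and m :: int
  assumes a: "a > 0" and xc: "\<bar>x - c\<bar> < h" and xm: "\<bar>x - m / a\<bar> < d"
    and h: "2 * a * h \<le> 1" and d: "a * d \<le> 1/2"
  shows "m = \<lfloor>a * (c - h) - 1/2\<rfloor> + 1 \<or> m = \<lfloor>a * (c - h) - 1/2\<rfloor> + 2"
proof -
  let ?B = "a * (c - h) - 1/2"
  have "c - h - d < m / a" "m / a < c + h + d" using xc xm by linarith+
  then have "a * (c - h - d) < m" "m < a * (c + h + d)" using a by (simp_all add: field_simps)
  then have lo: "?B < m" and hi: "m < ?B + 2" using d h by (simp_all add: algebra_simps)
  have "?B < of_int \<lfloor>?B\<rfloor> + 1"
    by (rule floor_correct[THEN conjunct2, unfolded of_int_add of_int_1])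
  then have "(of_int m :: real) < of_int (\<lfloor>?B\<rfloor> + 3)" using hi by linarith
  moreover have "\<lfloor>?B\<rfloor> < m" using lo by (simp add: floor_less_iff)
  ultimately show ?thesis by (simp only: of_int_less_iff) linarith
qed

lemma grid_point_near:
  fixes a x x' y r c h :: real
  assumes a: "a > 0" and xx': "\<bar>x - x'\<bar> < r" and x'y: "\<bar>x' - y\<bar> < r"
    and fl: "\<lfloor>a * x'\<rfloor> \<noteq> \<lfloor>a * y\<rfloor>" and xc: "\<bar>x - c\<bar> < h"
    and h: "2 * a * h \<le> 1" and r: "a * (2 * r) \<le> 1/2"
  shows "\<exists>i\<in>{1, 2::int}. \<bar>x - (\<lfloor>a * (c - h) - 1/2\<rfloor> + i) / a\<bar> < 2 * r"
proof -
  obtain m :: int where "\<bar>x' - m / a\<bar> < r" using grid_point_between[OF a x'y fl] by blast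
  then have xm: "\<bar>x - m / a\<bar> < 2 * r" using xx' by linarith
  from grid_point_candidates[OF a xc xm h r] show ?thesis using xm by auto
qed

lemma image_affinity_ball_complex:
  fixes L c :: complex
  assumes L: "L \<noteq> 0"
  shows "(\<lambda>z. L * z + c) ` ball 0 r = ball c (norm L * r)"
proof (intro subset_antisym subsetI)
  fix w assume "w \<in> (\<lambda>z. L * z + c) ` ball 0 r"
  then obtain z where "norm z < r" "w = L * z + c" by auto
  then show "w \<in> ball c (norm L * r)" using L by (simp add: dist_norm norm_mult)
next
  fix w assume "w \<in> ball c (norm L * r)"
  then have "(w - c) / L \<in> ball 0 r"
    using L by (simp add: dist_norm norm_divide norm_minus_commute field_simps)
  moreover have "w = L * ((w - c) / L) + c" using L by simp
  ultimately show "w \<in> (\<lambda>z. L * z + c) ` ball 0 r" by blast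
qed

lemma in_tube_vertical: "\<bar>Re z - a\<bar> < \<delta> \<Longrightarrow> z \<in> tube \<i> (of_real a) \<delta>"
  unfolding tube_def
  by (rule CollectI, rule exI[of _ "Im z"]) (simp add: dist_norm cmod_def complex_eq_iff)

lemma in_tube_horizontal: "\<bar>Im z - b\<bar> < \<delta> \<Longrightarrow> z \<in> tube 1 (\<i> * of_real b) \<delta>"
  unfolding tube_def
  by (rule CollectI, rule exI[of _ "Re z"]) (simp add: dist_norm cmod_def complex_eq_iff)

lemma open_tube: "open (tube e x r)"
proof -
  have "tube e x r = (\<Union>s::real. ball (x + of_real s * e) r)"
    by (auto simp: tube_def dist_commute)
  then show ?thesis by auto
qed

lemma affine_vimage_tube:
  fixes L c e x :: complex
  assumes L: "L \<noteq> 0" and e: "e \<noteq> 0"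
  shows "(\<lambda>w. L * w + c) -` tube e x \<delta> \<subseteq> tube (sgn (e / L)) ((x - c) / L) (\<delta> / norm L)"
proof
  fix w assume "w \<in> (\<lambda>w. L * w + c) -` tube e x \<delta>"
  then obtain s :: real where s: "dist (L * w + c) (x + of_real s * e) < \<delta>"
    by (auto simp: tube_def)
  define d where "d = sgn (e / L)"
  let ?n = "norm (e / L)"
  let ?q = "(x - c) / L + of_real (s * ?n) * d"
  have n: "?n > 0" using e L by simp
  have "d = e / L / of_real ?n" unfolding d_def
    by (simp add: complex_sgn_def scaleR_conv_of_real field_simps del: sgn_divide)
  then have "L * w + c - (x + of_real s * e) = L * (w - ?q)"
    using L n by (simp add: field_simps)
  then have "norm L * dist w ?q < \<delta>"
    using s by (simp add: dist_norm norm_mult)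
  then have "dist w ?q < \<delta> / norm L"
    using L by (simp add: field_simps)
  then show "w \<in> tube (sgn (e / L)) ((x - c) / L) (\<delta> / norm L)"
    unfolding tube_def d_def by blast
qed

definition dyadic_index :: "nat \<Rightarrow> complex \<Rightarrow> int \<times> int" where
  "dyadic_index k x = (\<lfloor>2 ^ k * Re x\<rfloor>, \<lfloor>(2::real) ^ k * Im x\<rfloor>)"

definition dyadic_square :: "nat \<Rightarrow> int \<times> int \<Rightarrow> complex set" where
  "dyadic_square k q = {z. dyadic_index k z = q}"

lemma dyadic_eq_dyadic_square: "dyadic k x = dyadic_square k (dyadic_index k x)"
  by (simp add: dyadic_def dyadic_square_def dyadic_index_def)

lemma mem_dyadic_square_iff: "z \<in> dyadic_square k q \<longleftrightarrow> dyadic_index k z = q"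
  by (simp add: dyadic_square_def)

lemma dyadic_square_borel[measurable]: "dyadic_square k q \<in> sets borel"
  unfolding dyadic_square_def dyadic_index_def by measurable

lemma disjoint_family_dyadic_square: "disjoint_family_on (dyadic_square k) Q"
  by (auto simp: disjoint_family_on_def mem_dyadic_square_iff)

lemma countable_dyadic_indices: "countable (Q :: (int \<times> int) set)"
  by (rule countable_subset[OF subset_UNIV]) simp

text \<open>Direction and base point of the at most two vertical and two horizontal grid lines of level
  \<open>k\<close> that can come close to the disc of radius \<open>h\<close> around \<open>c\<close>
  (cf. grid_point_candidates).\<close>

definition grid_tube_params :: "nat \<Rightarrow> complex \<Rightarrow> real \<Rightarrow> (complex \<times> complex) set" where
  "grid_tube_params k c h = (\<Union>i\<in>{1, 2::int}.
     {(\<i>, of_real ((\<lfloor>2 ^ k * (Re c - h) - 1/2\<rfloor> + i) / 2 ^ k)),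
      (1, \<i> * of_real ((\<lfloor>2 ^ k * (Im c - h) - 1/2\<rfloor> + i) / 2 ^ k))})"

lemma finite_grid_tube_params: "finite (grid_tube_params k c h)"
  by (simp add: grid_tube_params_def)

lemma card_grid_tube_params_le: "card (grid_tube_params k c h) \<le> 4"
proof -
  have "card (grid_tube_params k c h) \<le> (\<Sum>i\<in>{1, 2::int}. card {(\<i>, of_real ((\<lfloor>2 ^ k * (Re c - h) - 1/2\<rfloor> + i) / 2 ^ k)),
      (1 :: complex, \<i> * of_real ((\<lfloor>2 ^ k * (Im c - h) - 1/2\<rfloor> + i) / 2 ^ k))})"
    unfolding grid_tube_params_def by (rule card_UN_le) simp
  also have "\<dots> \<le> (\<Sum>i\<in>{1, 2::int}. 2)"
    by (intro sum_mono) (simp add: card_insert_if)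
  finally show ?thesis by simp
qed

lemma grid_tube_params_nonzero: "(e, x) \<in> grid_tube_params k c h \<Longrightarrow> e \<noteq> 0"
  by (auto simp: grid_tube_params_def)

lemma near_grid_tube:
  assumes straddle: "\<not> ball c' r \<subseteq> dyadic k c'" and zc': "dist z c' < r" and zc: "dist z c < h"
    and h: "2 * 2 ^ k * h \<le> 1" and r: "2 ^ k * (2 * r) \<le> 1/2"
  shows "\<exists>(e, x)\<in>grid_tube_params k c h. z \<in> tube e x (2 * r)"
proof -
  let ?a = "2 ^ k :: real"
  obtain y where "y \<in> ball c' r" "y \<notin> dyadic k c'" using straddle by blast
  then have y: "dist c' y < r" and idx: "dyadic_index k y \<noteq> dyadic_index k c'"
    by (auto simp: dyadic_eq_dyadic_square mem_dyadic_square_iff)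
  have a: "?a > 0" by simp
  have "\<bar>Re z - Re c'\<bar> < r" "\<bar>Re c' - Re y\<bar> < r" "\<bar>Re z - Re c\<bar> < h"
    and "\<bar>Im z - Im c'\<bar> < r" "\<bar>Im c' - Im y\<bar> < r" "\<bar>Im z - Im c\<bar> < h"
    using zc' y zc abs_Re_le_cmod[of "z - c'"] abs_Re_le_cmod[of "c' - y"] abs_Re_le_cmod[of "z - c"]
      abs_Im_le_cmod[of "z - c'"] abs_Im_le_cmod[of "c' - y"] abs_Im_le_cmod[of "z - c"]
    by (simp_all add: dist_norm)
  moreover have "\<lfloor>?a * Re c'\<rfloor> \<noteq> \<lfloor>?a * Re y\<rfloor> \<or> \<lfloor>?a * Im c'\<rfloor> \<noteq> \<lfloor>?a * Im y\<rfloor>"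
    using idx by (auto simp: dyadic_index_def)
  ultimately consider
      (vertical) i where "i \<in> {1, 2::int}" "\<bar>Re z - (\<lfloor>?a * (Re c - h) - 1/2\<rfloor> + i) / ?a\<bar> < 2 * r"
    | (horizontal) i where "i \<in> {1, 2::int}" "\<bar>Im z - (\<lfloor>?a * (Im c - h) - 1/2\<rfloor> + i) / ?a\<bar> < 2 * r"
    using grid_point_near[OF a _ _ _ _ h r] by metis
  then show ?thesis
  proof cases
    case vertical
    then have "z \<in> tube \<i> (of_real ((\<lfloor>?a * (Re c - h) - 1/2\<rfloor> + i) / ?a)) (2 * r)"
      by (intro in_tube_vertical) simp
    moreover have "(\<i>, of_real ((\<lfloor>?a * (Re c - h) - 1/2\<rfloor> + i) / ?a)) \<in> grid_tube_params k c h"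
      using vertical(1) unfolding grid_tube_params_def by blast
    ultimately show ?thesis by blast
  next
    case horizontal
    then have "z \<in> tube 1 (\<i> * of_real ((\<lfloor>?a * (Im c - h) - 1/2\<rfloor> + i) / ?a)) (2 * r)"
      by (intro in_tube_horizontal) simp
    moreover have "(1, \<i> * of_real ((\<lfloor>?a * (Im c - h) - 1/2\<rfloor> + i) / ?a)) \<in> grid_tube_params k c h"
      using horizontal(1) unfolding grid_tube_params_def by blast
    ultimately show ?thesis by blast
  qed
qed

section \<open>The planar model and its self-similarity\<close>

locale planar_IFS =
  fixes kk :: "'i::finite \<Rightarrow> nat" and lam :: "'i \<Rightarrow> complex"
    and t :: "'i \<Rightarrow> nat \<Rightarrow> complex" and p :: "'i \<Rightarrow> nat \<Rightarrow> real" and R :: real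
  assumes planar: "planar_model kk lam t p R"
begin

abbreviation \<eta> :: "(nat \<Rightarrow> 'i) \<Rightarrow> complex measure" where
  "\<eta> \<omega> \<equiv> eta kk lam t p \<omega>"

lemma lam_pos: "0 < norm (lam i)"
  using planar by (simp add: planar_model_def)

lemma lam_less_1: "norm (lam i) < 1"
  using planar by (simp add: planar_model_def)

lemma p_pos: "j < kk i \<Longrightarrow> 0 < p i j"
  using planar by (simp add: planar_model_def)

lemma sum_p: "(\<Sum>j<kk i. p i j) = 1"
  using planar by (simp add: planar_model_def)

lemma R_pos: "0 < R"
  using planar by (simp add: planar_model_def)

lemma closure_fmap_ball: "j < kk i \<Longrightarrow> closure (fmap lam t i j ` ball 0 R) \<subseteq> ball 0 R"
  using planar by (simp add: planar_model_def)

definition rmax :: real where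
  "rmax = Max (range (\<lambda>i. norm (lam i)))"

lemma norm_lam_le_rmax: "norm (lam i) \<le> rmax"
  unfolding rmax_def by (rule Max_ge) auto

lemma rmax_less_1: "rmax < 1"
  unfolding rmax_def using lam_less_1 by (subst Max_less_iff) auto

lemma rmax_pos: "0 < rmax"
  using norm_lam_le_rmax lam_pos order_less_le_trans by blast

lemma prod_norm_lam_le_rmax_power: "(\<Prod>j\<in>A. norm (lam (\<omega> j))) \<le> rmax ^ card A"
proof -
  have "(\<Prod>j\<in>A. norm (lam (\<omega> j))) \<le> (\<Prod>j\<in>A. rmax)"
    by (intro prod_mono) (auto simp: norm_lam_le_rmax)
  then show ?thesis by simp
qed

lemma prod_lam_nonzero: "(\<Prod>j<(m::nat). lam ((\<omega>::nat \<Rightarrow> 'i) j)) \<noteq> 0"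
  by (subst prod_zero_iff) (use lam_pos in auto)

definition tmax :: real where
  "tmax = (\<Sum>i\<in>UNIV. \<Sum>j<kk i. norm (t i j))"

lemma norm_t_le_tmax: "j < kk i \<Longrightarrow> norm (t i j) \<le> tmax"
proof -
  assume "j < kk i"
  then have "norm (t i j) \<le> (\<Sum>j<kk i. norm (t i j))" by (intro member_le_sum) auto
  also have "\<dots> \<le> tmax" unfolding tmax_def
    by (rule member_le_sum[where f = "\<lambda>i. \<Sum>j<kk i. norm (t i j)"]) (auto intro: sum_nonneg)
  finally show ?thesis .
qed

lemma continuous_on_fmap: "continuous_on S (fmap lam t i j)"
  unfolding fmap_def by (intro continuous_intros)

lemma fmap_in_ball: "j < kk i \<Longrightarrow> z \<in> cball 0 R \<Longrightarrow> fmap lam t i j z \<in> ball 0 R"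
proof -
  assume j: "j < kk i" and z: "z \<in> cball 0 R"
  have "fmap lam t i j ` closure (ball 0 R) \<subseteq> closure (fmap lam t i j ` ball 0 R)"
    by (rule image_closure_subset) (auto intro: continuous_on_fmap closure_subset[THEN subsetD])
  moreover have "z \<in> closure (ball 0 R)" using z R_pos by (simp add: closure_ball)
  ultimately show ?thesis using closure_fmap_ball[OF j] by blast
qed

lemma fmap_vimage_borel: "A \<in> sets borel \<Longrightarrow> fmap lam t i j -` A \<in> sets borel"
  using measurable_sets[OF borel_measurable_continuous_onI[OF continuous_on_fmap], of A]
  by (simp only: space_borel Int_UNIV_right)

lemma shiftn_0[simp]: "shiftn 0 \<omega> = \<omega>"
  by (simp add: shiftn_def)

lemma shiftn_shiftn: "shiftn n (shiftn m \<omega>) = shiftn (n + m) \<omega>"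
  by (auto simp: shiftn_def add.assoc)

lemma pmf_digit_pmf: "pmf (digit_pmf kk p i) j = (if j < kk i then p i j else 0)"
proof -
  have "(\<integral>\<^sup>+ j. ennreal (if j < kk i then p i j else 0) \<partial>count_space UNIV)
      = (\<integral>\<^sup>+ j. ennreal (p i j) \<partial>count_space {..<kk i})"
    by (subst nn_integral_count_space_indicator) (auto intro!: nn_integral_cong simp: indicator_def)
  also have "\<dots> = ennreal (\<Sum>j<kk i. p i j)"
    by (subst nn_integral_count_space_finite) (auto intro!: sum_ennreal less_imp_le p_pos)
  finally show ?thesis unfolding digit_pmf_def
    by (subst pmf_embed_pmf) (auto simp: less_imp_le[OF p_pos] sum_p)
qed

lemma set_pmf_digit_pmf: "set_pmf (digit_pmf kk p i) = {..<kk i}"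
  using p_pos[of _ i] by (force simp: set_pmf_iff pmf_digit_pmf split: if_splits)

definition digit_space :: "(nat \<Rightarrow> 'i) \<Rightarrow> (nat \<Rightarrow> nat) measure" where
  "digit_space \<omega> = (\<Pi>\<^sub>M m\<in>UNIV. measure_pmf (digit_pmf kk p (\<omega> m)))"

definition coding_term :: "(nat \<Rightarrow> 'i) \<Rightarrow> (nat \<Rightarrow> nat) \<Rightarrow> nat \<Rightarrow> complex" where
  "coding_term \<omega> u m = (\<Prod>j<m. lam (\<omega> j)) * t (\<omega> m) (u m)"

definition coding_map :: "(nat \<Rightarrow> 'i) \<Rightarrow> (nat \<Rightarrow> nat) \<Rightarrow> complex" where
  "coding_map \<omega> u = (\<Sum>m. coding_term \<omega> u m)"

definition admissible :: "(nat \<Rightarrow> 'i) \<Rightarrow> (nat \<Rightarrow> nat) \<Rightarrow> bool" where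
  "admissible \<omega> u \<longleftrightarrow> (\<forall>m. u m < kk (\<omega> m))"

lemma eta_eq_distr_coding_map: "\<eta> \<omega> = distr (digit_space \<omega>) borel (coding_map \<omega>)"
  unfolding eta_def digit_space_def coding_map_def coding_term_def ..

lemma prob_space_digit_space: "prob_space (digit_space \<omega>)"
  unfolding digit_space_def by (intro prob_space_PiM prob_space_measure_pmf)

lemma coding_map_measurable[measurable]: "coding_map \<omega> \<in> borel_measurable (digit_space \<omega>)"
proof -
  have "(\<lambda>u. coding_term \<omega> u m) \<in> borel_measurable (digit_space \<omega>)" for m
  proof -
    have "(\<lambda>u. u m) \<in> measurable (digit_space \<omega>) (measure_pmf (digit_pmf kk p (\<omega> m)))"
      unfolding digit_space_def by (rule measurable_component_singleton) simp
    moreover have "(\<lambda>x. (\<Prod>j<m. lam (\<omega> j)) * t (\<omega> m) x)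
        \<in> borel_measurable (measure_pmf (digit_pmf kk p (\<omega> m)))"
      by simp
    ultimately show ?thesis unfolding coding_term_def by (rule measurable_compose)
  qed
  then show ?thesis unfolding coding_map_def by measurable
qed

lemma case_nat_measurable_digit_space:
  "(\<lambda>(s, v). case_nat s v)
     \<in> measurable (measure_pmf (digit_pmf kk p (\<omega> 0)) \<Otimes>\<^sub>M digit_space (shiftn 1 \<omega>)) (digit_space \<omega>)"
  using measurable_case_nat_PiM[of "\<lambda>m. measure_pmf (digit_pmf kk p (\<omega> m))"]
  by (simp add: digit_space_def shiftn_def)

lemma prob_space_eta: "prob_space (\<eta> \<omega>)"
  unfolding eta_eq_distr_coding_map
  by (rule prob_space.prob_space_distr[OF prob_space_digit_space coding_map_measurable])

lemma sets_eta[simp]: "sets (\<eta> \<omega>) = sets borel"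
  unfolding eta_eq_distr_coding_map by simp

lemma space_eta[simp]: "space (\<eta> \<omega>) = UNIV"
  unfolding eta_eq_distr_coding_map by simp

lemma emeasure_eta_eq_measure: "emeasure (\<eta> \<omega>) X = ennreal (measure (\<eta> \<omega>) X)"
  using finite_measure.emeasure_eq_measure[OF prob_space.finite_measure[OF prob_space_eta]] by simp

lemma admissible_shift: "admissible \<omega> u \<Longrightarrow> admissible (shiftn 1 \<omega>) (\<lambda>m. u (Suc m))"
  by (simp add: admissible_def shiftn_def)

lemma norm_coding_term_le: "admissible \<omega> u \<Longrightarrow> norm (coding_term \<omega> u m) \<le> tmax * rmax ^ m"
proof -
  assume u: "admissible \<omega> u"
  have "norm (\<Prod>j<m. lam (\<omega> j)) \<le> rmax ^ m"
    using prod_norm_lam_le_rmax_power[of \<omega> "{..<m}"] by (simp add: prod_norm)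
  moreover have t: "norm (t (\<omega> m) (u m)) \<le> tmax"
    using u by (auto simp: admissible_def intro: norm_t_le_tmax)
  moreover have "0 \<le> tmax" using t norm_ge_zero order_trans by blast
  ultimately show ?thesis unfolding coding_term_def norm_mult
    by (simp add: mult.commute mult_mono)
qed

lemma summable_coding_term: "admissible \<omega> u \<Longrightarrow> summable (coding_term \<omega> u)"
  using rmax_less_1 rmax_pos
  by (intro summable_comparison_test'[where N = 0, OF summable_mult[OF summable_geometric]])
    (auto intro: norm_coding_term_le)

lemma coding_term_Suc:
  "coding_term \<omega> u (Suc m) = lam (\<omega> 0) * coding_term (shiftn 1 \<omega>) (\<lambda>m. u (Suc m)) m"
  by (simp add: coding_term_def shiftn_def prod.lessThan_Suc_shift del: prod.lessThan_Suc)

lemma coding_map_unfold: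
  assumes u: "admissible \<omega> u"
  shows "coding_map \<omega> u = fmap lam t (\<omega> 0) (u 0) (coding_map (shiftn 1 \<omega>) (\<lambda>m. u (Suc m)))"
proof -
  have "coding_map \<omega> u = (\<Sum>m. coding_term \<omega> u (Suc m)) + coding_term \<omega> u 0"
    unfolding coding_map_def using suminf_split_head[OF summable_coding_term[OF u]] by simp
  also have "(\<Sum>m. coding_term \<omega> u (Suc m)) = lam (\<omega> 0) * coding_map (shiftn 1 \<omega>) (\<lambda>m. u (Suc m))"
    unfolding coding_term_Suc coding_map_def
    by (rule suminf_mult[OF summable_coding_term[OF admissible_shift[OF u]]])
  finally show ?thesis by (simp add: fmap_def coding_term_def)
qed

lemma coding_partial_sum_in_ball: "admissible \<omega> u \<Longrightarrow> (\<Sum>m<n. coding_term \<omega> u m) \<in> ball 0 R"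
proof (induction n arbitrary: \<omega> u)
  case 0
  then show ?case using R_pos by simp
next
  case (Suc n)
  have step: "(\<Sum>m<Suc n. coding_term \<omega> u m)
      = fmap lam t (\<omega> 0) (u 0) (\<Sum>m<n. coding_term (shiftn 1 \<omega>) (\<lambda>m. u (Suc m)) m)"
    by (simp add: sum.lessThan_Suc_shift coding_term_Suc fmap_def sum_distrib_left
        coding_term_def[of _ _ 0] add.commute del: sum.lessThan_Suc)
  show ?case unfolding step
    by (rule fmap_in_ball) (use Suc.IH[OF admissible_shift[OF Suc.prems]] Suc.prems in
        \<open>auto simp: admissible_def\<close>)
qed

lemma coding_map_in_cball:
  assumes u: "admissible \<omega> u"
  shows "coding_map \<omega> u \<in> cball 0 R"
proof (rule Lim_in_closed_set[OF closed_cball _ trivial_limit_sequentially])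
  show "(\<lambda>n. \<Sum>m<n. coding_term \<omega> u m) \<longlonglongrightarrow> coding_map \<omega> u"
    unfolding coding_map_def by (rule summable_LIMSEQ[OF summable_coding_term[OF u]])
  show "\<forall>\<^sub>F n in sequentially. (\<Sum>m<n. coding_term \<omega> u m) \<in> cball 0 R"
    using coding_partial_sum_in_ball[OF u] ball_subset_cball by (intro always_eventually) blast
qed

lemma coding_map_in_ball:
  assumes u: "admissible \<omega> u"
  shows "coding_map \<omega> u \<in> ball 0 R"
  unfolding coding_map_unfold[OF u]
  by (rule fmap_in_ball) (use u coding_map_in_cball[OF admissible_shift[OF u]] in
      \<open>auto simp: admissible_def\<close>)

lemma AE_admissible: "AE u in digit_space \<omega>. admissible \<omega> u"
proof -
  have "AE u in digit_space \<omega>. u m < kk (\<omega> m)" for m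
  proof -
    have "AE x in measure_pmf (digit_pmf kk p (\<omega> m)). x < kk (\<omega> m)"
      by (simp add: AE_measure_pmf_iff set_pmf_digit_pmf)
    then show ?thesis unfolding digit_space_def
      by (rule AE_PiM_component[OF prob_space_measure_pmf, rotated]) simp
  qed
  then show ?thesis unfolding admissible_def by (simp add: AE_all_countable)
qed

lemma measure_eta_ball: "measure (\<eta> \<omega>) (ball 0 R) = 1"
proof -
  interpret P: prob_space "digit_space \<omega>" by (rule prob_space_digit_space)
  have "AE u in digit_space \<omega>. u \<in> coding_map \<omega> -` ball 0 R \<inter> space (digit_space \<omega>)"
    using AE_admissible AE_space by eventually_elim (auto dest: coding_map_in_ball)
  then have "P.prob (coding_map \<omega> -` ball 0 R \<inter> space (digit_space \<omega>)) = 1"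
    by (subst P.prob_eq_1) (auto intro: measurable_sets)
  then show ?thesis unfolding eta_eq_distr_coding_map by (simp add: measure_distr)
qed

lemma measure_eta_outside_ball: "measure (\<eta> \<omega>) (UNIV - ball 0 R) = 0"
  using prob_space.prob_compl[OF prob_space_eta, of "ball 0 R" \<omega>] measure_eta_ball by simp

lemma emeasure_digit_space_fiber:
  assumes A: "A \<in> sets borel" and s: "s < kk (\<omega> 0)"
  shows "emeasure (digit_space (shiftn 1 \<omega>))
      {v \<in> space (digit_space (shiftn 1 \<omega>)). coding_map \<omega> (case_nat s v) \<in> A}
    = emeasure (\<eta> (shiftn 1 \<omega>)) (fmap lam t (\<omega> 0) s -` A)"
proof -
  let ?P = "digit_space (shiftn 1 \<omega>)" and ?g = "coding_map (shiftn 1 \<omega>)"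
  have "(\<lambda>v. coding_map \<omega> (case_nat s v)) \<in> borel_measurable ?P"
    using measurable_Pair2[OF measurable_compose[OF case_nat_measurable_digit_space
          coding_map_measurable], of s] by simp
  then have fiber: "{v \<in> space ?P. coding_map \<omega> (case_nat s v) \<in> A} \<in> sets ?P"
    using A by measurable
  have "AE v in ?P. v \<in> ?g -` fmap lam t (\<omega> 0) s -` A \<inter> space ?P
      \<longleftrightarrow> v \<in> {v \<in> space ?P. coding_map \<omega> (case_nat s v) \<in> A}"
    using AE_admissible
  proof eventually_elim
    case (elim v)
    then have "admissible \<omega> (case_nat s v)"
      using s by (auto simp: admissible_def shiftn_def split: nat.split)
    then show ?case by (auto simp: coding_map_unfold)
  qed
  then have "emeasure ?P (?g -` fmap lam t (\<omega> 0) s -` A \<inter> space ?P)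
      = emeasure ?P {v \<in> space ?P. coding_map \<omega> (case_nat s v) \<in> A}"
    using fiber A by (intro emeasure_eq_AE) (auto intro!: measurable_sets[OF coding_map_measurable] fmap_vimage_borel)
  then show ?thesis
    unfolding eta_eq_distr_coding_map by (simp add: emeasure_distr fmap_vimage_borel[OF A])
qed

lemma emeasure_eta_first_digit:
  assumes A: "A \<in> sets borel"
  shows "emeasure (\<eta> \<omega>) A = (\<Sum>j<kk (\<omega> 0).
    ennreal (p (\<omega> 0) j) * emeasure (\<eta> (shiftn 1 \<omega>)) (fmap lam t (\<omega> 0) j -` A))"
proof -
  let ?M0 = "measure_pmf (digit_pmf kk p (\<omega> 0))" and ?P = "digit_space (shiftn 1 \<omega>)"
  let ?c = "\<lambda>(s, v). case_nat s v :: nat \<Rightarrow> nat"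
  let ?g = "\<lambda>x. coding_map \<omega> (?c x)"
  interpret P: prob_space ?P by (rule prob_space_digit_space)
  have g: "?g \<in> borel_measurable (?M0 \<Otimes>\<^sub>M ?P)"
    by (rule measurable_compose[OF case_nat_measurable_digit_space coding_map_measurable])
  have split: "distr (?M0 \<Otimes>\<^sub>M ?P) (digit_space \<omega>) ?c = digit_space \<omega>"
    using distr_case_nat_PiM[of "\<lambda>m. measure_pmf (digit_pmf kk p (\<omega> m))"]
    by (simp add: digit_space_def shiftn_def prob_space_measure_pmf)
  have "\<eta> \<omega> = distr (distr (?M0 \<Otimes>\<^sub>M ?P) (digit_space \<omega>) ?c) borel (coding_map \<omega>)"
    unfolding eta_eq_distr_coding_map by (simp only: split)
  also have "\<dots> = distr (?M0 \<Otimes>\<^sub>M ?P) borel ?g"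
    by (rule trans[OF distr_distr[OF coding_map_measurable case_nat_measurable_digit_space]])
      (simp add: comp_def)
  finally have "\<eta> \<omega> = distr (?M0 \<Otimes>\<^sub>M ?P) borel ?g" .
  then have "emeasure (\<eta> \<omega>) A = emeasure (?M0 \<Otimes>\<^sub>M ?P) (?g -` A \<inter> space (?M0 \<Otimes>\<^sub>M ?P))"
    using g A by (simp add: emeasure_distr)
  also have "\<dots> = (\<integral>\<^sup>+s. emeasure ?P (Pair s -` (?g -` A \<inter> space (?M0 \<Otimes>\<^sub>M ?P))) \<partial>?M0)"
    using g A by (intro P.emeasure_pair_measure_alt measurable_sets)
  also have "\<dots> = (\<Sum>s\<in>{..<kk (\<omega> 0)}.
      emeasure ?P (Pair s -` (?g -` A \<inter> space (?M0 \<Otimes>\<^sub>M ?P))) * pmf (digit_pmf kk p (\<omega> 0)) s)"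
    by (subst nn_integral_measure_pmf_finite) (auto simp: set_pmf_digit_pmf)
  also have "\<dots> = (\<Sum>j<kk (\<omega> 0).
      ennreal (p (\<omega> 0) j) * emeasure (\<eta> (shiftn 1 \<omega>)) (fmap lam t (\<omega> 0) j -` A))"
  proof (rule sum.cong[OF refl])
    fix s assume s: "s \<in> {..<kk (\<omega> 0)}"
    have "Pair s -` (?g -` A \<inter> space (?M0 \<Otimes>\<^sub>M ?P))
        = {v \<in> space ?P. coding_map \<omega> (case_nat s v) \<in> A}"
      by (auto simp: space_pair_measure)
    then show "emeasure ?P (Pair s -` (?g -` A \<inter> space (?M0 \<Otimes>\<^sub>M ?P))) * pmf (digit_pmf kk p (\<omega> 0)) s
        = ennreal (p (\<omega> 0) s) * emeasure (\<eta> (shiftn 1 \<omega>)) (fmap lam t (\<omega> 0) s -` A)"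
      using s emeasure_digit_space_fiber[OF A, of s \<omega>] by (simp add: pmf_digit_pmf mult.commute)
  qed
  finally show ?thesis .
qed

lemma AE_eta_ball: "AE z in \<eta> \<omega>. z \<in> ball 0 R"
  using prob_space.prob_eq_1[OF prob_space_eta, of "ball 0 R" \<omega>] measure_eta_ball by simp

lemma fword_affine: "fword lam t \<omega> u z = (\<Prod>j<length u. lam (\<omega> j)) * z + fword lam t \<omega> u 0"
proof (induction u arbitrary: \<omega> z)
  case Nil
  then show ?case by simp
next
  case (Cons a u)
  have "fword lam t \<omega> (a # u) z = lam (\<omega> 0) * fword lam t (shiftn 1 \<omega>) u z + t (\<omega> 0) a"
    by (simp add: fmap_def)
  also have "fword lam t (shiftn 1 \<omega>) u z
      = (\<Prod>j<length u. lam (\<omega> (Suc j))) * z + fword lam t (shiftn 1 \<omega>) u 0"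
    using Cons.IH[of "shiftn 1 \<omega>" z] by (simp add: shiftn_def)
  finally show ?case
    by (simp add: fmap_def prod.lessThan_Suc_shift algebra_simps del: prod.lessThan_Suc)
qed

lemma fword_eq_affine:
  obtains L c where "L \<noteq> 0" "norm L = (\<Prod>j<length u. norm (lam (\<omega> j)))" "c = fword lam t \<omega> u 0"
    "fword lam t \<omega> u = (\<lambda>z. L * z + c)"
proof
  show "(\<Prod>j<length u. lam (\<omega> j)) \<noteq> 0" by (rule prod_lam_nonzero)
  show "norm (\<Prod>j<length u. lam (\<omega> j)) = (\<Prod>j<length u. norm (lam (\<omega> j)))"
    by (simp add: prod_norm)
  show "fword lam t \<omega> u = (\<lambda>z. (\<Prod>j<length u. lam (\<omega> j)) * z + fword lam t \<omega> u 0)"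
    using fword_affine by blast
qed simp

lemma fword_vimage_borel: "A \<in> sets borel \<Longrightarrow> fword lam t \<omega> u -` A \<in> sets borel"
proof -
  obtain L c where f: "fword lam t \<omega> u = (\<lambda>z. L * z + c)" by (rule fword_eq_affine)
  have "(\<lambda>z. L * z + c) \<in> borel_measurable borel"
    by (intro borel_measurable_continuous_onI continuous_intros)
  then show "A \<in> sets borel \<Longrightarrow> fword lam t \<omega> u -` A \<in> sets borel"
    unfolding f using measurable_sets[of "\<lambda>z. L * z + c" borel borel A] by simp
qed

lemma fword_image_ball:
  "fword lam t \<omega> u ` ball 0 R = ball (fword lam t \<omega> u 0) (R * (\<Prod>j<length u. norm (lam (\<omega> j))))"
proof -
  obtain L c where L: "L \<noteq> 0" "norm L = (\<Prod>j<length u. norm (lam (\<omega> j)))"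
    and c: "c = fword lam t \<omega> u 0" and f: "fword lam t \<omega> u = (\<lambda>z. L * z + c)"
    by (rule fword_eq_affine)
  show ?thesis
    unfolding f c[symmetric] image_affinity_ball_complex[OF L(1)] L(2) by (simp add: mult.commute)
qed

lemma words_Cons:
  "a # u \<in> words kk \<omega> n \<longleftrightarrow> n = Suc (length u) \<and> a < kk (\<omega> 0) \<and> u \<in> words kk (shiftn 1 \<omega>) (length u)"
proof -
  have all_less_Suc: "(\<forall>j<Suc m. P j) \<longleftrightarrow> P 0 \<and> (\<forall>j<m. P (Suc j))" for P m
    by (auto simp: less_Suc_eq_0_disj)
  show ?thesis unfolding words_def
    by (cases "n = Suc (length u)") (simp_all add: all_less_Suc shiftn_def)
qed

lemma length_words: "u \<in> words kk \<omega> n \<Longrightarrow> length u = n"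
  by (simp add: words_def)

lemma words_0: "words kk \<omega> 0 = {[]}"
  by (auto simp: words_def)

lemma words_Suc:
  "words kk \<omega> (Suc n) = (\<lambda>(j, u). j # u) ` (SIGMA j:{..<kk (\<omega> 0)}. words kk (shiftn 1 \<omega>) n)"
proof (rule set_eqI)
  fix x
  show "x \<in> words kk \<omega> (Suc n) \<longleftrightarrow> x \<in> (\<lambda>(j, u). j # u) ` (SIGMA j:{..<kk (\<omega> 0)}. words kk (shiftn 1 \<omega>) n)"
  proof (cases x)
    case Nil
    then show ?thesis by (auto simp: words_def)
  next
    case (Cons a u)
    have "x \<in> words kk \<omega> (Suc n) \<longleftrightarrow> a < kk (\<omega> 0) \<and> u \<in> words kk (shiftn 1 \<omega>) n"
      unfolding Cons words_Cons by (auto simp: words_def)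
    then show ?thesis using Cons by auto
  qed
qed

lemma finite_words: "finite (words kk \<omega> n)"
  by (induction n arbitrary: \<omega>) (simp_all add: words_0 words_Suc)

lemma sum_words_Suc:
  "(\<Sum>v\<in>words kk \<omega> (Suc n). g v) = (\<Sum>j<kk (\<omega> 0). \<Sum>u\<in>words kk (shiftn 1 \<omega>) n. g (j # u))"
proof -
  have "inj_on (\<lambda>(j, u). j # u) (SIGMA j:{..<kk (\<omega> 0)}. words kk (shiftn 1 \<omega>) n)"
    by (auto simp: inj_on_def)
  then have "(\<Sum>v\<in>words kk \<omega> (Suc n). g v)
      = (\<Sum>(j, u)\<in>(SIGMA j:{..<kk (\<omega> 0)}. words kk (shiftn 1 \<omega>) n). g (j # u))"
    unfolding words_Suc by (subst sum.reindex) (auto simp: case_prod_unfold)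
  also have "\<dots> = (\<Sum>j<kk (\<omega> 0). \<Sum>u\<in>words kk (shiftn 1 \<omega>) n. g (j # u))"
    by (rule sum.Sigma[symmetric]) (auto simp: finite_words)
  finally show ?thesis .
qed

lemma pword_pos: "u \<in> words kk \<omega> n \<Longrightarrow> 0 < pword p \<omega> u"
proof (induction u arbitrary: \<omega> n)
  case Nil
  then show ?case by simp
next
  case (Cons a u)
  then show ?case by (auto simp: words_Cons intro!: mult_pos_pos p_pos)
qed

lemma pword_nonneg: "u \<in> words kk \<omega> n \<Longrightarrow> 0 \<le> pword p \<omega> u"
  using pword_pos less_imp_le by blast

lemma emeasure_eta_words:
  assumes "A \<in> sets borel"
  shows "emeasure (\<eta> \<omega>) A = (\<Sum>u\<in>words kk \<omega> n.
    ennreal (pword p \<omega> u) * emeasure (\<eta> (shiftn n \<omega>)) (fword lam t \<omega> u -` A))"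
  using assms
proof (induction n arbitrary: \<omega> A)
  case 0
  then show ?case by (simp add: words_0)
next
  case (Suc n)
  let ?\<omega>' = "shiftn 1 \<omega>"
  have "(\<Sum>v\<in>words kk \<omega> (Suc n). ennreal (pword p \<omega> v) * emeasure (\<eta> (shiftn (Suc n) \<omega>)) (fword lam t \<omega> v -` A))
      = (\<Sum>j<kk (\<omega> 0). \<Sum>u\<in>words kk ?\<omega>' n. ennreal (p (\<omega> 0) j) * (ennreal (pword p ?\<omega>' u) *
          emeasure (\<eta> (shiftn n ?\<omega>')) (fword lam t ?\<omega>' u -` fmap lam t (\<omega> 0) j -` A)))"
    unfolding sum_words_Suc
    by (intro sum.cong refl)
      (auto simp: shiftn_shiftn ennreal_mult' pword_nonneg less_imp_le[OF p_pos] mult.assoc vimage_comp)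
  also have "\<dots> = (\<Sum>j<kk (\<omega> 0). ennreal (p (\<omega> 0) j) * emeasure (\<eta> ?\<omega>') (fmap lam t (\<omega> 0) j -` A))"
    using Suc fmap_vimage_borel by (simp add: sum_distrib_left)
  also have "\<dots> = emeasure (\<eta> \<omega>) A"
    by (rule emeasure_eta_first_digit[OF Suc.prems, symmetric])
  finally show ?case ..
qed

definition piece_measure :: "(nat \<Rightarrow> 'i) \<Rightarrow> nat \<Rightarrow> nat list \<Rightarrow> complex set \<Rightarrow> real" where
  "piece_measure \<omega> n u X = measure (\<eta> (shiftn n \<omega>)) (fword lam t \<omega> u -` X)"

lemma piece_measure_nonneg: "0 \<le> piece_measure \<omega> n u X"
  by (simp add: piece_measure_def)

lemma piece_measure_le_1: "piece_measure \<omega> n u X \<le> 1"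
  unfolding piece_measure_def by (rule prob_space.prob_le_1[OF prob_space_eta])

lemma piece_measure_UNIV: "piece_measure \<omega> n u UNIV = 1"
  unfolding piece_measure_def using prob_space.prob_space[OF prob_space_eta] by simp

lemma piece_measure_mono:
  "X \<subseteq> Y \<Longrightarrow> Y \<in> sets borel \<Longrightarrow> piece_measure \<omega> n u X \<le> piece_measure \<omega> n u Y"
  unfolding piece_measure_def
  by (rule finite_measure.finite_measure_mono[OF prob_space.finite_measure[OF prob_space_eta]])
    (auto intro: fword_vimage_borel)

lemma piece_measure_inter:
  assumes "fword lam t \<omega> u ` ball 0 R \<subseteq> D" "D \<in> sets borel" "A \<in> sets borel"
  shows "piece_measure \<omega> n u (D \<inter> A) = piece_measure \<omega> n u A"
proof -
  have "AE z in \<eta> (shiftn n \<omega>). z \<in> fword lam t \<omega> u -` (D \<inter> A) \<longleftrightarrow> z \<in> fword lam t \<omega> u -` A"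
    using AE_eta_ball[of "shiftn n \<omega>"] by eventually_elim (use assms(1) in auto)
  then show ?thesis
    unfolding piece_measure_def using assms by (intro measure_eq_AE) (auto intro: fword_vimage_borel)
qed

lemma ennreal_sum_pieces:
  assumes "S \<subseteq> words kk \<omega> n"
  shows "ennreal (\<Sum>u\<in>S. pword p \<omega> u * piece_measure \<omega> n u X)
    = (\<Sum>u\<in>S. ennreal (pword p \<omega> u) * emeasure (\<eta> (shiftn n \<omega>)) (fword lam t \<omega> u -` X))"
  using assms
  by (subst sum_ennreal[symmetric])
    (auto intro!: sum.cong mult_nonneg_nonneg pword_nonneg piece_measure_nonneg
      simp: ennreal_mult' pword_nonneg piece_measure_def emeasure_eta_eq_measure)

lemma measure_eta_words:
  assumes "X \<in> sets borel"
  shows "measure (\<eta> \<omega>) X = (\<Sum>u\<in>words kk \<omega> n. pword p \<omega> u * piece_measure \<omega> n u X)"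
proof -
  have "ennreal (measure (\<eta> \<omega>) X) = ennreal (\<Sum>u\<in>words kk \<omega> n. pword p \<omega> u * piece_measure \<omega> n u X)"
    using emeasure_eta_words[OF assms, of \<omega> n] by (simp add: ennreal_sum_pieces emeasure_eta_eq_measure)
  then show ?thesis
    by (simp add: sum_nonneg mult_nonneg_nonneg pword_nonneg piece_measure_nonneg)
qed

lemma sum_pword_words: "(\<Sum>u\<in>words kk \<omega> n. pword p \<omega> u) = 1"
  using measure_eta_words[of UNIV \<omega> n] prob_space.prob_space[OF prob_space_eta]
  by (simp add: piece_measure_UNIV)

definition inside_words :: "(nat \<Rightarrow> 'i) \<Rightarrow> nat \<Rightarrow> complex set \<Rightarrow> nat list set" where
  "inside_words \<omega> n D = {u \<in> words kk \<omega> n. fword lam t \<omega> u ` ball 0 R \<subseteq> D}"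

lemma inside_words_subset: "inside_words \<omega> n D \<subseteq> words kk \<omega> n"
  by (auto simp: inside_words_def)

lemma measure_trunc_sq:
  assumes A: "A \<in> sets borel"
  shows "measure (trunc_sq kk lam t p R \<omega> n D) A =
    (\<Sum>u\<in>inside_words \<omega> n D. pword p \<omega> u * piece_measure \<omega> n u A) / (\<Sum>u\<in>inside_words \<omega> n D. pword p \<omega> u)"
proof -
  let ?S = "inside_words \<omega> n D"
  let ?Z = "\<Sum>u\<in>?S. pword p \<omega> u" and ?G = "\<Sum>u\<in>?S. pword p \<omega> u * piece_measure \<omega> n u A"
  have fin: "finite ?S" using finite_subset[OF inside_words_subset finite_words] .
  have "emeasure (trunc_sq kk lam t p R \<omega> n D) A = (\<Sum>u\<in>?S. ennreal (pword p \<omega> u) *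
      emeasure (distr (\<eta> (shiftn n \<omega>)) borel (fword lam t \<omega> u)) A) / ennreal ?Z"
    unfolding trunc_sq_def inside_words_def[symmetric] Let_def
    by (rule emeasure_finite_mixture[OF fin _ A]) simp
  also have "(\<Sum>u\<in>?S. ennreal (pword p \<omega> u) * emeasure (distr (\<eta> (shiftn n \<omega>)) borel (fword lam t \<omega> u)) A)
      = ennreal ?G"
    using A by (simp add: ennreal_sum_pieces[OF inside_words_subset] emeasure_distr fword_vimage_borel
        measurable_def)
  finally have e: "emeasure (trunc_sq kk lam t p R \<omega> n D) A = ennreal ?G / ennreal ?Z" .
  show ?thesis
  proof (cases "?S = {}")
    case True
    then show ?thesis unfolding measure_def e by simp
  next
    case False
    have pos: "u \<in> ?S \<Longrightarrow> 0 < pword p \<omega> u" for u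
      using inside_words_subset pword_pos by blast
    then have "0 < ?Z" using False fin by (intro sum_pos) auto
    moreover have "0 \<le> ?G"
      using pos by (intro sum_nonneg mult_nonneg_nonneg piece_measure_nonneg less_imp_le)
    ultimately show ?thesis unfolding measure_def e by (simp add: divide_ennreal)
  qed
qed

lemma measure_eta_inter_split:
  assumes D: "D \<in> sets borel" and A: "A \<in> sets borel"
  shows "measure (\<eta> \<omega>) (D \<inter> A) = (\<Sum>u\<in>inside_words \<omega> n D. pword p \<omega> u * piece_measure \<omega> n u A)
      + (\<Sum>u\<in>words kk \<omega> n - inside_words \<omega> n D. pword p \<omega> u * piece_measure \<omega> n u (D \<inter> A))"
proof -
  have "measure (\<eta> \<omega>) (D \<inter> A) = (\<Sum>u\<in>words kk \<omega> n. pword p \<omega> u * piece_measure \<omega> n u (D \<inter> A))"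
    using D A by (intro measure_eta_words) auto
  also have "\<dots> = (\<Sum>u\<in>words kk \<omega> n - inside_words \<omega> n D. pword p \<omega> u * piece_measure \<omega> n u (D \<inter> A))
      + (\<Sum>u\<in>inside_words \<omega> n D. pword p \<omega> u * piece_measure \<omega> n u (D \<inter> A))"
    by (rule sum.subset_diff[OF inside_words_subset finite_words])
  also have "(\<Sum>u\<in>inside_words \<omega> n D. pword p \<omega> u * piece_measure \<omega> n u (D \<inter> A))
      = (\<Sum>u\<in>inside_words \<omega> n D. pword p \<omega> u * piece_measure \<omega> n u A)"
    using D A by (intro sum.cong refl) (simp add: inside_words_def piece_measure_inter)
  finally show ?thesis by simp
qed

lemma tv_dist_uniform_trunc_sq_le:
  assumes D: "D \<in> sets borel" and pos: "0 < measure (\<eta> \<omega>) D"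
  shows "tv_dist (uniform_measure (\<eta> \<omega>) D) (trunc_sq kk lam t p R \<omega> n D)
     \<le> (\<Sum>u\<in>words kk \<omega> n - inside_words \<omega> n D. pword p \<omega> u * piece_measure \<omega> n u D) / measure (\<eta> \<omega>) D"
  unfolding tv_dist_def
proof (rule cSUP_least)
  let ?W = "words kk \<omega> n" and ?S = "inside_words \<omega> n D"
  let ?e = "\<Sum>u\<in>?W - ?S. pword p \<omega> u * piece_measure \<omega> n u D"
  let ?Z = "\<Sum>u\<in>?S. pword p \<omega> u"
  have etaD: "measure (\<eta> \<omega>) D = ?Z + ?e"
    using measure_eta_inter_split[OF D sets.top[of borel], of \<omega> n] by (simp add: piece_measure_UNIV)
  show "sets (uniform_measure (\<eta> \<omega>) D) \<noteq> {}" by auto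
  fix A assume "A \<in> sets (uniform_measure (\<eta> \<omega>) D)"
  then have A: "A \<in> sets borel" by simp
  let ?g = "\<Sum>u\<in>?S. pword p \<omega> u * piece_measure \<omega> n u A"
  let ?E = "\<Sum>u\<in>?W - ?S. pword p \<omega> u * piece_measure \<omega> n u (D \<inter> A)"
  have raw: "measure (uniform_measure (\<eta> \<omega>) D) A = measure (\<eta> \<omega>) (D \<inter> A) / measure (\<eta> \<omega>) D"
    using pos A by (intro measure_uniform_measure) (auto simp: emeasure_eta_eq_measure)
  have pw: "u \<in> ?W \<Longrightarrow> 0 \<le> pword p \<omega> u" for u by (rule pword_nonneg)
  have pw': "u \<in> ?S \<Longrightarrow> 0 \<le> pword p \<omega> u" for u using inside_words_subset pw by blast
  have "0 \<le> ?g" by (intro sum_nonneg mult_nonneg_nonneg piece_measure_nonneg pw')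
  moreover have "?g \<le> ?Z" by (intro sum_mono mult_left_le piece_measure_le_1 pw')
  moreover have "0 \<le> ?E" by (intro sum_nonneg mult_nonneg_nonneg piece_measure_nonneg) (auto intro: pw)
  moreover have "?E \<le> ?e" using D
    by (intro sum_mono mult_left_mono piece_measure_mono) (auto intro: pw)
  moreover have "0 < ?Z + ?e" using pos etaD by simp
  ultimately have "\<bar>(?g + ?E) / (?Z + ?e) - ?g / ?Z\<bar> \<le> ?e / (?Z + ?e)"
    by (rule abs_ratio_perturbation_le)
  then show "\<bar>measure (uniform_measure (\<eta> \<omega>) D) A - measure (trunc_sq kk lam t p R \<omega> n D) A\<bar>
      \<le> ?e / measure (\<eta> \<omega>) D"
    unfolding raw measure_trunc_sq[OF A] measure_eta_inter_split[OF D A, of \<omega> n] etaD .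
qed

section \<open>Cylinders straddling the dyadic grid\<close>

definition straddling_words :: "(nat \<Rightarrow> 'i) \<Rightarrow> nat \<Rightarrow> nat \<Rightarrow> nat list set" where
  "straddling_words \<omega> n k =
     {u \<in> words kk \<omega> n. \<not> fword lam t \<omega> u ` ball 0 R \<subseteq> dyadic k (fword lam t \<omega> u 0)}"

definition straddling_mass :: "(nat \<Rightarrow> 'i) \<Rightarrow> nat \<Rightarrow> nat \<Rightarrow> complex set \<Rightarrow> real" where
  "straddling_mass \<omega> n k X = (\<Sum>u\<in>straddling_words \<omega> n k. pword p \<omega> u * piece_measure \<omega> n u X)"

definition straddling_set :: "(nat \<Rightarrow> 'i) \<Rightarrow> nat \<Rightarrow> nat \<Rightarrow> complex set" where
  "straddling_set \<omega> n k = (\<Union>u\<in>straddling_words \<omega> n k. fword lam t \<omega> u ` ball 0 R)"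

lemma straddling_words_subset: "straddling_words \<omega> n k \<subseteq> words kk \<omega> n"
  by (auto simp: straddling_words_def)

lemma straddling_mass_nonneg: "0 \<le> straddling_mass \<omega> n k X"
  unfolding straddling_mass_def using straddling_words_subset
  by (auto intro!: sum_nonneg mult_nonneg_nonneg pword_nonneg piece_measure_nonneg)

lemma straddling_set_borel: "straddling_set \<omega> n k \<in> sets borel"
  unfolding straddling_set_def fword_image_ball by (intro borel_open open_UN) auto

lemma outside_mass_le_straddling_mass:
  "(\<Sum>u\<in>words kk \<omega> n - inside_words \<omega> n (dyadic_square k q).
      pword p \<omega> u * piece_measure \<omega> n u (dyadic_square k q))
    \<le> straddling_mass \<omega> n k (dyadic_square k q)"
proof -
  let ?W = "words kk \<omega> n" and ?S = "inside_words \<omega> n (dyadic_square k q)"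
    and ?T = "straddling_words \<omega> n k"
  let ?f = "\<lambda>u. pword p \<omega> u * piece_measure \<omega> n u (dyadic_square k q)"
  have "?f u = 0" if u: "u \<in> ?W - ?S - ?T" for u
  proof -
    let ?D = "dyadic_square k (dyadic_index k (fword lam t \<omega> u 0))"
    have sub: "fword lam t \<omega> u ` ball 0 R \<subseteq> ?D"
      using u by (auto simp: straddling_words_def dyadic_eq_dyadic_square)
    then have "dyadic_index k (fword lam t \<omega> u 0) \<noteq> q"
      using u by (auto simp: inside_words_def)
    then have "?D \<inter> dyadic_square k q = {}" by (auto simp: mem_dyadic_square_iff)
    then have "piece_measure \<omega> n u (dyadic_square k q) = piece_measure \<omega> n u {}"
      using piece_measure_inter[OF sub, of "dyadic_square k q"] by simp
    then show ?thesis by (simp add: piece_measure_def)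
  qed
  then have "(\<Sum>u\<in>?W - ?S. ?f u) = (\<Sum>u\<in>(?W - ?S) \<inter> ?T. ?f u)"
    by (intro sum.mono_neutral_right) (auto simp: finite_words)
  also have "\<dots> \<le> (\<Sum>u\<in>?T. ?f u)"
    using straddling_words_subset
    by (intro sum_mono2) (auto intro!: mult_nonneg_nonneg pword_nonneg piece_measure_nonneg
        finite_subset[OF straddling_words_subset finite_words])
  finally show ?thesis unfolding straddling_mass_def .
qed

lemma nn_integral_straddling_mass_squares:
  "(\<integral>\<^sup>+q. ennreal (straddling_mass \<omega> n k (dyadic_square k q)) \<partial>count_space UNIV)
    = ennreal (straddling_mass \<omega> n k UNIV)"
proof -
  let ?T = "straddling_words \<omega> n k" and ?\<eta>' = "\<eta> (shiftn n \<omega>)"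
  have "(\<integral>\<^sup>+q. ennreal (straddling_mass \<omega> n k (dyadic_square k q)) \<partial>count_space UNIV)
      = (\<integral>\<^sup>+q. (\<Sum>u\<in>?T. ennreal (pword p \<omega> u) * emeasure ?\<eta>' (fword lam t \<omega> u -` dyadic_square k q))
          \<partial>count_space UNIV)"
    unfolding straddling_mass_def by (simp add: ennreal_sum_pieces[OF straddling_words_subset])
  also have "\<dots> = (\<Sum>u\<in>?T. \<integral>\<^sup>+q. ennreal (pword p \<omega> u) *
      emeasure ?\<eta>' (fword lam t \<omega> u -` dyadic_square k q) \<partial>count_space UNIV)"
    by (rule nn_integral_sum) simp
  also have "\<dots> = (\<Sum>u\<in>?T. ennreal (pword p \<omega> u) * emeasure ?\<eta>' (fword lam t \<omega> u -` UNIV))"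
  proof (intro sum.cong refl)
    fix u
    have "(\<integral>\<^sup>+q. emeasure ?\<eta>' (fword lam t \<omega> u -` dyadic_square k q) \<partial>count_space UNIV)
        = emeasure ?\<eta>' (\<Union>q. fword lam t \<omega> u -` dyadic_square k q)"
      by (rule emeasure_UN_countable[symmetric])
        (auto simp: disjoint_family_on_def mem_dyadic_square_iff intro: fword_vimage_borel)
    also have "(\<Union>q. fword lam t \<omega> u -` dyadic_square k q) = fword lam t \<omega> u -` UNIV"
      by (auto simp: mem_dyadic_square_iff)
    finally show "(\<integral>\<^sup>+q. ennreal (pword p \<omega> u) * emeasure ?\<eta>' (fword lam t \<omega> u -` dyadic_square k q)
        \<partial>count_space UNIV) = ennreal (pword p \<omega> u) * emeasure ?\<eta>' (fword lam t \<omega> u -` UNIV)"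
      by (simp add: nn_integral_cmult)
  qed
  also have "\<dots> = ennreal (straddling_mass \<omega> n k UNIV)"
    unfolding straddling_mass_def by (simp add: ennreal_sum_pieces[OF straddling_words_subset])
  finally show ?thesis .
qed

lemma measure_heavy_squares_le:
  fixes \<omega> :: "nat \<Rightarrow> 'i" and n k :: nat
  assumes eps: "0 < \<epsilon>"
  defines "Q \<equiv> {q. \<epsilon> * measure (\<eta> \<omega>) (dyadic_square k q) \<le> straddling_mass \<omega> n k (dyadic_square k q)}"
  shows "\<epsilon> * measure (\<eta> \<omega>) (\<Union>q\<in>Q. dyadic_square k q) \<le> straddling_mass \<omega> n k UNIV"
proof -
  have "ennreal \<epsilon> * emeasure (\<eta> \<omega>) (\<Union>q\<in>Q. dyadic_square k q)
      = (\<integral>\<^sup>+q. ennreal \<epsilon> * emeasure (\<eta> \<omega>) (dyadic_square k q) \<partial>count_space Q)"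
    by (subst emeasure_UN_countable)
      (auto simp: countable_dyadic_indices disjoint_family_dyadic_square nn_integral_cmult)
  also have "\<dots> \<le> (\<integral>\<^sup>+q. ennreal (straddling_mass \<omega> n k (dyadic_square k q)) \<partial>count_space Q)"
    using eps by (intro nn_integral_mono)
      (auto simp: Q_def emeasure_eta_eq_measure ennreal_mult'[symmetric] ennreal_leI)
  also have "\<dots> = (\<integral>\<^sup>+q. ennreal (straddling_mass \<omega> n k (dyadic_square k q)) * indicator Q q
      \<partial>count_space UNIV)"
    by (rule nn_integral_count_space_indicator) simp
  also have "\<dots> \<le> (\<integral>\<^sup>+q. ennreal (straddling_mass \<omega> n k (dyadic_square k q)) \<partial>count_space UNIV)"
    by (rule nn_integral_mono) (simp add: indicator_def)
  finally have "ennreal (\<epsilon> * measure (\<eta> \<omega>) (\<Union>q\<in>Q. dyadic_square k q))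
      \<le> ennreal (straddling_mass \<omega> n k UNIV)"
    using eps by (simp add: nn_integral_straddling_mass_squares emeasure_eta_eq_measure ennreal_mult')
  then show ?thesis by (simp add: ennreal_le_iff straddling_mass_nonneg)
qed

lemma tv_dist_components_le:
  assumes pos: "0 < measure (\<eta> \<omega>) (dyadic k x)"
  shows "tv_dist (raw_comp (\<eta> \<omega>) k x) (trunc_comp kk lam t p R \<omega> n k x)
    \<le> straddling_mass \<omega> n k (dyadic k x) / measure (\<eta> \<omega>) (dyadic k x)"
proof -
  have pos': "0 < measure (\<eta> \<omega>) (dyadic_square k (dyadic_index k x))"
    using pos by (simp add: dyadic_eq_dyadic_square)
  show ?thesis unfolding raw_comp_def trunc_comp_def dyadic_eq_dyadic_square
    by (rule order_trans[OF tv_dist_uniform_trunc_sq_le[OF dyadic_square_borel pos']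
          divide_right_mono[OF outside_mass_le_straddling_mass less_imp_le[OF pos']]])
qed

lemma measure_tv_small_gt:
  assumes eps: "0 < \<epsilon>" and small: "straddling_mass \<omega> n k UNIV < \<epsilon> * \<epsilon>"
  shows "1 - \<epsilon> < measure (\<eta> \<omega>) {x. tv_dist (raw_comp (\<eta> \<omega>) k x) (trunc_comp kk lam t p R \<omega> n k x) < \<epsilon>}"
proof -
  interpret prob_space "\<eta> \<omega>" by (rule prob_space_eta)
  let ?sq = "dyadic_square k"
  define Q where "Q = {q. \<epsilon> * measure (\<eta> \<omega>) (?sq q) \<le> straddling_mass \<omega> n k (?sq q)}"
  define G where "G = {x. tv_dist (raw_comp (\<eta> \<omega>) k x) (trunc_comp kk lam t p R \<omega> n k x) < \<epsilon>}"
  have G_eq: "G = (\<Union>q\<in>{q. tv_dist (uniform_measure (\<eta> \<omega>) (?sq q)) (trunc_sq kk lam t p R \<omega> n (?sq q)) < \<epsilon>}. ?sq q)"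
    by (auto simp: G_def raw_comp_def trunc_comp_def dyadic_eq_dyadic_square mem_dyadic_square_iff)
  have "UNIV - (\<Union>q\<in>Q. ?sq q) \<subseteq> G"
  proof
    fix x assume "x \<in> UNIV - (\<Union>q\<in>Q. ?sq q)"
    then have less: "straddling_mass \<omega> n k (dyadic k x) < \<epsilon> * measure (\<eta> \<omega>) (dyadic k x)"
      by (auto simp: Q_def dyadic_eq_dyadic_square mem_dyadic_square_iff)
    have "0 < \<epsilon> * measure (\<eta> \<omega>) (dyadic k x)"
      using straddling_mass_nonneg less by (rule le_less_trans)
    then have pos: "0 < measure (\<eta> \<omega>) (dyadic k x)"
      using eps by (simp add: zero_less_mult_iff)
    have "tv_dist (raw_comp (\<eta> \<omega>) k x) (trunc_comp kk lam t p R \<omega> n k x)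
        \<le> straddling_mass \<omega> n k (dyadic k x) / measure (\<eta> \<omega>) (dyadic k x)"
      by (rule tv_dist_components_le[OF pos])
    also have "\<dots> < \<epsilon>" using less pos by (simp add: divide_less_eq)
    finally show "x \<in> G" by (simp add: G_def)
  qed
  moreover have "G \<in> events"
    unfolding G_eq sets_eta by (intro sets.countable_UN'' countable_dyadic_indices dyadic_square_borel)
  ultimately have "measure (\<eta> \<omega>) (UNIV - (\<Union>q\<in>Q. ?sq q)) \<le> measure (\<eta> \<omega>) G"
    by (rule finite_measure_mono)
  moreover have "(\<Union>q\<in>Q. ?sq q) \<in> events"
    unfolding sets_eta by (intro sets.countable_UN'' countable_dyadic_indices dyadic_square_borel)
  then have "measure (\<eta> \<omega>) (UNIV - (\<Union>q\<in>Q. ?sq q)) = 1 - measure (\<eta> \<omega>) (\<Union>q\<in>Q. ?sq q)"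
    using prob_compl by simp
  moreover have "\<epsilon> * measure (\<eta> \<omega>) (\<Union>q\<in>Q. ?sq q) < \<epsilon> * \<epsilon>"
    using measure_heavy_squares_le[OF eps, of \<omega> k n] small by (simp add: Q_def)
  ultimately show ?thesis using eps by (simp add: G_def)
qed

section \<open>The Frostman bound for straddling cylinders\<close>

lemma vimage_straddling_set_subset:
  assumes fv: "fword lam t \<omega> v = (\<lambda>w. L * w + c)" and L: "L \<noteq> 0"
    and hL: "2 * 2 ^ k * (R * norm L) \<le> 1"
    and hn: "2 ^ k * (2 * (R * (\<Prod>j<n. norm (lam (\<omega> j))))) \<le> 1/2"
  shows "fword lam t \<omega> v -` straddling_set \<omega> n k \<subseteq> (UNIV - ball 0 R) \<union>
    (\<Union>(e, x)\<in>grid_tube_params k c (R * norm L).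
      tube (sgn (e / L)) ((x - c) / L) (2 * R * (\<Prod>j<n. norm (lam (\<omega> j))) / norm L))"
proof
  let ?r = "R * (\<Prod>j<n. norm (lam (\<omega> j)))"
  fix w assume w: "w \<in> fword lam t \<omega> v -` straddling_set \<omega> n k"
  show "w \<in> (UNIV - ball 0 R) \<union> (\<Union>(e, x)\<in>grid_tube_params k c (R * norm L).
      tube (sgn (e / L)) ((x - c) / L) (2 * R * (\<Prod>j<n. norm (lam (\<omega> j))) / norm L))"
  proof (cases "w \<in> ball 0 R")
    case True
    obtain u where "u \<in> straddling_words \<omega> n k" "L * w + c \<in> fword lam t \<omega> u ` ball 0 R"
      using w unfolding fv straddling_set_def by auto
    then have straddle: "\<not> ball (fword lam t \<omega> u 0) ?r \<subseteq> dyadic k (fword lam t \<omega> u 0)"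
      and near: "dist (L * w + c) (fword lam t \<omega> u 0) < ?r"
      using straddling_words_subset length_words
      by (auto simp: straddling_words_def fword_image_ball dist_commute)
    have "dist (L * w + c) c < R * norm L"
      using True L by (simp add: dist_norm norm_mult mult.commute)
    then obtain e x where ex: "(e, x) \<in> grid_tube_params k c (R * norm L)"
      and "L * w + c \<in> tube e x (2 * ?r)"
      using near_grid_tube[OF straddle near _ hL hn] by blast
    moreover have "e \<noteq> 0" using ex by (rule grid_tube_params_nonzero)
    ultimately have "w \<in> tube (sgn (e / L)) ((x - c) / L) (2 * ?r / norm L)"
      using affine_vimage_tube[OF L] by blast
    then show ?thesis by (intro UnI2 UN_I[OF ex]) (simp add: mult.assoc)
  qed simp
qed

lemma piece_measure_straddling_set_le:
  assumes Fr: "frostman_tubes (\<eta> (shiftn K \<omega>)) C \<rho>"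
    and hK: "2 * R * (\<Prod>j<K. norm (lam (\<omega> j))) \<le> 1 / 2 ^ k"
    and hn: "4 * R * (\<Prod>j<n. norm (lam (\<omega> j))) \<le> 1 / 2 ^ k"
    and v: "v \<in> words kk \<omega> K"
  shows "piece_measure \<omega> K v (straddling_set \<omega> n k)
    \<le> 4 * C * (2 * R * (\<Prod>j<n. norm (lam (\<omega> j))) / (\<Prod>j<K. norm (lam (\<omega> j)))) powr \<rho>"
proof -
  obtain L c where L: "L \<noteq> 0" "norm L = (\<Prod>j<length v. norm (lam (\<omega> j)))"
    and fv: "fword lam t \<omega> v = (\<lambda>w. L * w + c)"
    by (rule fword_eq_affine)
  have normL: "norm L = (\<Prod>j<K. norm (lam (\<omega> j)))" using L(2) length_words[OF v] by simp
  define \<delta> where "\<delta> = 2 * R * (\<Prod>j<n. norm (lam (\<omega> j))) / norm L"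
  define G where "G = grid_tube_params k c (R * norm L)"
  define pull where "pull = (\<lambda>(e, x). tube (sgn (e / L)) ((x - c) / L) \<delta>)"
  let ?\<eta> = "\<eta> (shiftn K \<omega>)"
  have \<delta>: "0 < \<delta>"
    unfolding \<delta>_def using L(1) lam_pos R_pos by (intro divide_pos_pos mult_pos_pos prod_pos) auto
  have "fword lam t \<omega> v -` straddling_set \<omega> n k \<subseteq> (UNIV - ball 0 R) \<union> (\<Union>g\<in>G. pull g)"
    unfolding G_def pull_def \<delta>_def using hK hn
    by (intro vimage_straddling_set_subset[OF fv L(1)]) (simp_all add: normL field_simps)
  moreover have pull: "pull g \<in> sets borel" for g
    by (auto simp: pull_def open_tube split: prod.split)
  moreover have outside: "UNIV - ball 0 R \<in> sets borel"
    by (intro borel_closed closed_Diff) auto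
  moreover have tubes: "(\<Union>g\<in>G. pull g) \<in> sets borel"
    using pull by (intro sets.finite_UN) (auto simp: G_def finite_grid_tube_params)
  ultimately have "piece_measure \<omega> K v (straddling_set \<omega> n k)
      \<le> measure ?\<eta> ((UNIV - ball 0 R) \<union> (\<Union>g\<in>G. pull g))"
    unfolding piece_measure_def
    by (intro finite_measure.finite_measure_mono[OF prob_space.finite_measure[OF prob_space_eta]]) auto
  also have "\<dots> \<le> measure ?\<eta> (UNIV - ball 0 R) + measure ?\<eta> (\<Union>g\<in>G. pull g)"
    using outside tubes by (intro measure_Un_le) auto
  also have "\<dots> \<le> 0 + (\<Sum>g\<in>G. measure ?\<eta> (pull g))"
    using pull finite_grid_tube_params
    by (simp add: measure_eta_outside_ball G_def measure_UNION_le)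
  also have "\<dots> \<le> of_nat (card G) * (C * \<delta> powr \<rho>)"
  proof (simp, rule sum_bounded_above)
    fix g assume "g \<in> G"
    moreover obtain e x where g: "g = (e, x)" by (cases g)
    ultimately have "(e, x) \<in> grid_tube_params k c (R * norm L)" by (simp add: G_def)
    then have "e \<noteq> 0" by (rule grid_tube_params_nonzero)
    then have "norm (sgn (e / L)) = 1" using L(1) by (simp add: norm_sgn del: sgn_divide)
    then show "measure ?\<eta> (pull g) \<le> C * \<delta> powr \<rho>"
      unfolding pull_def g prod.case using \<delta> by (rule Fr[unfolded frostman_tubes_def, rule_format])
  qed
  also have "\<dots> \<le> 4 * (C * \<delta> powr \<rho>)"
  proof (rule mult_right_mono)
    have "measure ?\<eta> (tube 1 0 \<delta>) \<le> C * \<delta> powr \<rho>"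
      using \<delta> by (intro Fr[unfolded frostman_tubes_def, rule_format]) auto
    then show "0 \<le> C * \<delta> powr \<rho>" using measure_nonneg order_trans by blast
  qed (simp add: G_def card_grid_tube_params_le)
  finally show ?thesis by (simp add: \<delta>_def normL mult.assoc)
qed

lemma straddling_mass_UNIV_le:
  assumes Fr: "frostman_tubes (\<eta> (shiftn K \<omega>)) C \<rho>"
    and hK: "2 * R * (\<Prod>j<K. norm (lam (\<omega> j))) \<le> 1 / 2 ^ k"
    and hn: "4 * R * (\<Prod>j<n. norm (lam (\<omega> j))) \<le> 1 / 2 ^ k"
  shows "straddling_mass \<omega> n k UNIV
    \<le> 4 * C * (2 * R * (\<Prod>j<n. norm (lam (\<omega> j))) / (\<Prod>j<K. norm (lam (\<omega> j)))) powr \<rho>"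
    (is "_ \<le> ?B")
proof -
  let ?X = "straddling_set \<omega> n k" and ?T = "straddling_words \<omega> n k"
  have "straddling_mass \<omega> n k UNIV = (\<Sum>u\<in>?T. pword p \<omega> u)"
    by (simp add: straddling_mass_def piece_measure_UNIV)
  also have "\<dots> \<le> (\<Sum>u\<in>?T. pword p \<omega> u * piece_measure \<omega> n u ?X)"
  proof (rule sum_mono)
    fix u assume u: "u \<in> ?T"
    have "ball 0 R \<subseteq> fword lam t \<omega> u -` ?X" using u by (auto simp: straddling_set_def)
    then have "measure (\<eta> (shiftn n \<omega>)) (ball 0 R) \<le> piece_measure \<omega> n u ?X"
      unfolding piece_measure_def
      by (intro finite_measure.finite_measure_mono[OF prob_space.finite_measure[OF prob_space_eta]])
        (simp_all add: fword_vimage_borel straddling_set_borel)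
    then have "piece_measure \<omega> n u ?X = 1"
      using piece_measure_le_1[of \<omega> n u ?X] by (simp add: measure_eta_ball)
    then show "pword p \<omega> u \<le> pword p \<omega> u * piece_measure \<omega> n u ?X" by simp
  qed
  also have "\<dots> \<le> (\<Sum>u\<in>words kk \<omega> n. pword p \<omega> u * piece_measure \<omega> n u ?X)"
    by (rule sum_mono2[OF finite_words straddling_words_subset])
      (auto intro!: mult_nonneg_nonneg pword_nonneg piece_measure_nonneg)
  also have "\<dots> = (\<Sum>v\<in>words kk \<omega> K. pword p \<omega> v * piece_measure \<omega> K v ?X)"
    by (simp add: measure_eta_words[OF straddling_set_borel, symmetric])
  also have "\<dots> \<le> (\<Sum>v\<in>words kk \<omega> K. pword p \<omega> v * ?B)"
    by (intro sum_mono mult_left_mono piece_measure_straddling_set_le[OF Fr hK hn] pword_nonneg)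
  also have "\<dots> = ?B"
    by (simp add: sum_distrib_right[symmetric] sum_pword_words)
  finally show ?thesis .
qed

lemma kprime_le: "2 * R * (\<Prod>j<kprime lam R \<omega> k. norm (lam (\<omega> j))) \<le> 1 / 2 ^ k"
  unfolding kprime_def
proof (rule LeastI_ex)
  have "(\<lambda>m. 2 * R * rmax ^ m) \<longlonglongrightarrow> 2 * R * 0"
    using rmax_less_1 rmax_pos by (intro tendsto_mult tendsto_const LIMSEQ_power_zero) auto
  then have "eventually (\<lambda>m. 2 * R * rmax ^ m < 1 / 2 ^ k) sequentially"
    by (intro order_tendstoD(2)) auto
  then obtain m where m: "2 * R * rmax ^ m < 1 / 2 ^ k"
    by (auto simp: eventually_sequentially)
  moreover have "2 * R * (\<Prod>j<m. norm (lam (\<omega> j))) \<le> 2 * R * rmax ^ m"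
    using prod_norm_lam_le_rmax_power[of \<omega> "{..<m}"] R_pos by simp
  ultimately show "\<exists>k'. 2 * R * (\<Prod>j<k'. norm (lam (\<omega> j))) \<le> 1 / 2 ^ k"
    by (intro exI[of _ m]) simp
qed

lemma exists_depth:
  assumes "0 < \<epsilon>" "0 < C" "0 < \<rho>"
  shows "\<exists>N::nat. rmax ^ N \<le> 1/2 \<and> 4 * C * (2 * R * rmax ^ N) powr \<rho> < \<epsilon> * \<epsilon>"
proof -
  have lim: "(\<lambda>N. rmax ^ N) \<longlonglongrightarrow> 0"
    using rmax_less_1 rmax_pos by (intro LIMSEQ_power_zero) auto
  then have "(\<lambda>N. 2 * R * rmax ^ N) \<longlonglongrightarrow> 2 * R * 0"
    by (intro tendsto_mult tendsto_const)
  then have "(\<lambda>N. (2 * R * rmax ^ N) powr \<rho>) \<longlonglongrightarrow> 0"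
    using assms R_pos rmax_pos
    by (intro tendsto_zero_powrI[where b = \<rho>]) (auto intro!: always_eventually)
  then have "(\<lambda>N. 4 * C * (2 * R * rmax ^ N) powr \<rho>) \<longlonglongrightarrow> 0"
    by (rule tendsto_mult_right_zero)
  then have "eventually (\<lambda>N. 4 * C * (2 * R * rmax ^ N) powr \<rho> < \<epsilon> * \<epsilon>) sequentially"
    by (rule order_tendstoD(2)) (simp add: assms)
  moreover have "eventually (\<lambda>N. rmax ^ N < 1/2) sequentially"
    using lim by (intro order_tendstoD) auto
  ultimately have "eventually (\<lambda>N. rmax ^ N < 1/2 \<and> 4 * C * (2 * R * rmax ^ N) powr \<rho> < \<epsilon> * \<epsilon>)
      sequentially"
    by (rule eventually_conj[rotated])
  then obtain N where "rmax ^ N < 1/2" "4 * C * (2 * R * rmax ^ N) powr \<rho> < \<epsilon> * \<epsilon>"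
    by (auto simp: eventually_sequentially)
  then show ?thesis by (intro exI[of _ N]) simp
qed

text \<open>The condition \<open>rmax ^ N \<le> 1/2\<close> makes the cylinders of depth \<open>k'(\<omega>) + N\<close> small
  compared with the grid spacing \<open>2 ^ -k\<close>, as required by near_grid_tube.\<close>

lemma straddling_mass_UNIV_less:
  assumes C: "0 < C" and rho: "0 < \<rho>" and N1: "rmax ^ N \<le> 1/2"
    and N2: "4 * C * (2 * R * rmax ^ N) powr \<rho> < \<epsilon> * \<epsilon>"
    and Fr: "frostman_tubes (\<eta> (shiftn (kprime lam R \<omega> k) \<omega>)) C \<rho>"
  shows "straddling_mass \<omega> (kprime lam R \<omega> k + N) k UNIV < \<epsilon> * \<epsilon>"
proof -
  define K where "K = kprime lam R \<omega> k"
  define s where "s = (\<Prod>j<K. norm (lam (\<omega> j)))"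
  define P where "P = (\<Prod>j\<in>{K..<K + N}. norm (lam (\<omega> j)))"
  have s: "0 < s" unfolding s_def using lam_pos by (intro prod_pos) auto
  have P: "0 \<le> P" "P \<le> rmax ^ N"
    unfolding P_def using prod_norm_lam_le_rmax_power[of \<omega> "{K..<K + N}"] by (auto intro: prod_nonneg)
  have hK: "2 * R * s \<le> 1 / 2 ^ k" unfolding s_def K_def by (rule kprime_le)
  have split: "(\<Prod>j<K + N. norm (lam (\<omega> j))) = s * P"
    unfolding s_def P_def atLeast0LessThan[symmetric] by (rule prod.atLeastLessThan_concat[symmetric]) auto
  have "4 * R * (s * P) = (2 * (2 * R * s)) * P" by simp
  also have "\<dots> \<le> (2 * (1 / 2 ^ k)) * (1/2)"
    using hK N1 P s R_pos by (intro mult_mono) auto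
  finally have hn: "4 * R * (\<Prod>j<K + N. norm (lam (\<omega> j))) \<le> 1 / 2 ^ k" by (simp add: split)
  have "straddling_mass \<omega> (K + N) k UNIV \<le> 4 * C * (2 * R * (s * P) / s) powr \<rho>"
    using straddling_mass_UNIV_le[OF Fr[folded K_def] hK[unfolded s_def] hn] by (simp add: split s_def)
  also have "\<dots> \<le> 4 * C * (2 * R * rmax ^ N) powr \<rho>"
    using C rho R_pos s P by (auto intro!: mult_left_mono powr_mono2)
  finally show ?thesis using N2 unfolding K_def by simp
qed

end

theorem lemma3p14:
  fixes kk :: "'i::finite \<Rightarrow> nat" and lam :: "'i \<Rightarrow> complex"
    and t :: "'i \<Rightarrow> nat \<Rightarrow> complex" and p :: "'i \<Rightarrow> nat \<Rightarrow> real" and R :: real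
  assumes "planar_model kk lam t p R"
  shows "\<forall>\<epsilon>>0. \<forall>C>0. \<forall>\<rho>>0. \<exists>N::nat. \<forall>(\<omega>::nat \<Rightarrow> 'i) (k::nat).
           frostman_tubes (eta kk lam t p (shiftn (kprime lam R \<omega> k) \<omega>)) C \<rho> \<longrightarrow>
           (let n = kprime lam R \<omega> k + N
            in measure (eta kk lam t p \<omega>)
                 {x. tv_dist (raw_comp (eta kk lam t p \<omega>) k x) (trunc_comp kk lam t p R \<omega> n k x) < \<epsilon>}
               > 1 - \<epsilon>)"
proof -
  interpret planar_IFS kk lam t p R by (rule planar_IFS.intro[OF assms])
  have "\<exists>N. \<forall>\<omega> k. frostman_tubes (\<eta> (shiftn (kprime lam R \<omega> k) \<omega>)) C \<rho> \<longrightarrow>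
      1 - \<epsilon> < measure (\<eta> \<omega>)
        {x. tv_dist (raw_comp (\<eta> \<omega>) k x) (trunc_comp kk lam t p R \<omega> (kprime lam R \<omega> k + N) k x) < \<epsilon>}"
    if pos: "0 < \<epsilon>" "0 < C" "0 < \<rho>" for \<epsilon> C \<rho>
  proof -
    obtain N where "rmax ^ N \<le> 1/2" "4 * C * (2 * R * rmax ^ N) powr \<rho> < \<epsilon> * \<epsilon>"
      using exists_depth[OF pos] by blast
    then show ?thesis
      using measure_tv_small_gt[OF pos(1) straddling_mass_UNIV_less[OF pos(2,3)]] by blast
  qed
  then show ?thesis unfolding Let_def by blast
qed

end
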